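(* Let $V=\mathbb{C}^{m\times n}$ viewed as a real vector space with inner product $\langle A,B\rangle=\Re\operatorname{trace}(AB^\star)$, and let $\|\cdot\|_X=\|\cdot\|_\star$ be the nuclear norm and $\|\cdot\|_Y=\|\cdot\|_\sigma$ the spectral norm (these are dual to each other). Let $C\in V$ be nonzero with distinct nonzero singular values $\lambda_1>\lambda_2>\cdots>\lambda_r>0$ of multiplicities $m_1,\dots,m_r$, and write $C=WDU^\star$ with $W,U$ unitary and $D$ the $m\times n$ matrix with diagonal $(\lambda_1I_{m_1},\dots,\lambda_rI_{m_r},0,\dots,0)$. Put $k_j=m_1+\cdots+m_j$, $\lambda_{r+1}=0$ and $C^{(j)}=(\lambda_j-\lambda_{j+1})\,W\begin{pmatrix}I_{k_j}&0\\0&0\end{pmatrix}U^\star$ for $j=1,\dots,r$. Then $C=C^{(1)}+\cdots+C^{(r)}$ is an $XY$-slope decomposition, with $\|C^{(j)}\|_\sigma=\lambda_j-\lambda_{j+1}$, $\|C^{(j)}\|_\star=k_j(\lambda_j-\lambda_{j+1})$. In particular every matrix is tight, i.e. the nuclear and spectral norms are tight.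
   Context: $A^\star$ is the conjugate transpose. Nuclear norm: $\|A\|_\star=\operatorname{trace}\sqrt{A^\star A}$ = sum of singular values; spectral norm: $\|A\|_\sigma=\max\{\|Av\|_2:\|v\|_2=1\}$ = largest singular value. For nonzero $v$, $\mu_{XY}(v)=\|v\|_Y/\|v\|_X$. An expression $c=c_1+\cdots+c_r$ is an $XY$-slope decomposition if all $c_i$ are nonzero, $\langle c_i,c_j\rangle=\|c_i\|_X\|c_j\|_Y$ for all $i\le j$, and $\mu_{XY}(c_1)>\cdots>\mu_{XY}(c_r)$. A vector $c$ is tight if every $X2$-decomposition of it is an $XY$-decomposition, where for norms $\|\cdot\|_P,\|\cdot\|_Q$, $c=a+b$ is a $PQ$-decomposition if for every decomposition $c=a'+b'$: $\|a'\|_P>\|a\|_P$, or $\|b'\|_Q>\|b\|_Q$, or $(\|a'\|_P,\|b'\|_Q)=(\|a\|_P,\|b\|_Q)$. *)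

theory Defs
  imports Complex_Main "Jordan_Normal_Form.Matrix"
begin

text \<open>Complex matrices are Jordan_Normal_Form matrices of type complex mat; the space
  V = C^(m x n) is carrier_mat m n, regarded as a real vector space.\<close>

definition cT :: "complex mat \<Rightarrow> complex mat" where
  "cT A = mat (dim_col A) (dim_row A) (\<lambda>(i,j). cnj (A $$ (j,i)))"

definition unitary_mat :: "nat \<Rightarrow> complex mat \<Rightarrow> bool" where
  "unitary_mat n U \<longleftrightarrow> U \<in> carrier_mat n n \<and> U * cT U = 1\<^sub>m n \<and> cT U * U = 1\<^sub>m n"

definition mtrace :: "complex mat \<Rightarrow> complex" where
  "mtrace A = (\<Sum>i<dim_row A. A $$ (i,i))"

definition innerV :: "complex mat \<Rightarrow> complex mat \<Rightarrow> real" where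
  "innerV A B = Re (mtrace (A * cT B))"

definition norm2V :: "complex mat \<Rightarrow> real" where
  "norm2V A = sqrt (innerV A A)"

definition vnorm :: "complex vec \<Rightarrow> real" where
  "vnorm v = sqrt (\<Sum>i<dim_vec v. (cmod (v $ i))\<^sup>2)"

definition spectral_norm :: "complex mat \<Rightarrow> real" where
  "spectral_norm A = Sup {vnorm (A *\<^sub>v v) | v. v \<in> carrier_vec (dim_col A) \<and> vnorm v = 1}"

definition psd_mat :: "nat \<Rightarrow> complex mat \<Rightarrow> bool" where
  "psd_mat n P \<longleftrightarrow> P \<in> carrier_mat n n \<and> cT P = P \<and>
     (\<forall>v \<in> carrier_vec n. 0 \<le> Re (\<Sum>i<n. \<Sum>j<n. cnj (v $ i) * P $$ (i,j) * v $ j))"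

definition msqrt :: "complex mat \<Rightarrow> complex mat" where
  "msqrt A = (THE P. psd_mat (dim_row A) P \<and> P * P = A)"

definition nuclear_norm :: "complex mat \<Rightarrow> real" where
  "nuclear_norm A = Re (mtrace (msqrt (cT A * A)))"

definition slope :: "(complex mat \<Rightarrow> real) \<Rightarrow> (complex mat \<Rightarrow> real) \<Rightarrow> complex mat \<Rightarrow> real" where
  "slope X Y v = Y v / X v"

definition slope_decomp ::
  "(complex mat \<Rightarrow> real) \<Rightarrow> (complex mat \<Rightarrow> real) \<Rightarrow> nat \<Rightarrow> nat \<Rightarrow> complex mat \<Rightarrow> complex mat list \<Rightarrow> bool" where
  "slope_decomp X Y m n c cs \<longleftrightarrow>
     (\<forall>x \<in> set cs. x \<in> carrier_mat m n \<and> x \<noteq> 0\<^sub>m m n) \<and>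
     c = foldr (+) cs (0\<^sub>m m n) \<and>
     (\<forall>i j. i \<le> j \<and> j < length cs \<longrightarrow> innerV (cs ! i) (cs ! j) = X (cs ! i) * Y (cs ! j)) \<and>
     (\<forall>i. Suc i < length cs \<longrightarrow> slope X Y (cs ! i) > slope X Y (cs ! Suc i))"

definition pq_decomp ::
  "(complex mat \<Rightarrow> real) \<Rightarrow> (complex mat \<Rightarrow> real) \<Rightarrow> nat \<Rightarrow> nat \<Rightarrow> complex mat \<Rightarrow> complex mat \<Rightarrow> complex mat \<Rightarrow> bool" where
  "pq_decomp P Q m n c a b \<longleftrightarrow>
     a \<in> carrier_mat m n \<and> b \<in> carrier_mat m n \<and> c = a + b \<and>
     (\<forall>a' b'. a' \<in> carrier_mat m n \<and> b' \<in> carrier_mat m n \<and> c = a' + b' \<longrightarrow>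
        P a' > P a \<or> Q b' > Q b \<or> (P a', Q b') = (P a, Q b))"

definition tight ::
  "(complex mat \<Rightarrow> real) \<Rightarrow> (complex mat \<Rightarrow> real) \<Rightarrow> nat \<Rightarrow> nat \<Rightarrow> complex mat \<Rightarrow> bool" where
  "tight X Y m n c \<longleftrightarrow> (\<forall>a b. pq_decomp X norm2V m n c a b \<longrightarrow> pq_decomp X Y m n c a b)"

definition ksum :: "(nat \<Rightarrow> nat) \<Rightarrow> nat \<Rightarrow> nat" where
  "ksum mu j = (\<Sum>i=1..j. mu i)"

definition svd_diag :: "nat \<Rightarrow> nat \<Rightarrow> nat \<Rightarrow> (nat \<Rightarrow> real) \<Rightarrow> (nat \<Rightarrow> nat) \<Rightarrow> complex mat" where
  "svd_diag m n r lam mu = mat m n (\<lambda>(i,l). if i = l then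
      (\<Sum>j=1..r. if ksum mu (j - 1) \<le> i \<and> i < ksum mu j then complex_of_real (lam j) else 0) else 0)"

definition block_id :: "nat \<Rightarrow> nat \<Rightarrow> nat \<Rightarrow> complex mat" where
  "block_id m n k = mat m n (\<lambda>(i,l). if i = l \<and> i < k then 1 else 0)"

definition gap :: "nat \<Rightarrow> (nat \<Rightarrow> real) \<Rightarrow> nat \<Rightarrow> real" where
  "gap r lam j = lam j - (if j = r then 0 else lam (Suc j))"

definition Cpart :: "nat \<Rightarrow> nat \<Rightarrow> nat \<Rightarrow> (nat \<Rightarrow> real) \<Rightarrow> (nat \<Rightarrow> nat) \<Rightarrow> complex mat \<Rightarrow> complex mat \<Rightarrow> nat \<Rightarrow> complex mat" where
  "Cpart m n r lam mu W U j = complex_of_real (gap r lam j) \<cdot>\<^sub>m (W * block_id m n (ksum mu j) * cT U)"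

end

(* Everything is read off a singular value decomposition C = B U^*, where the columns of B are
   orthogonal with lengths s (the singular values).

   The pieces C^(j) share the singular vectors of C and are multiples of partial isometries of rank
   k_j, so <C^(i), C^(j)> = k_i g_i g_j = |C^(i)|_* |C^(j)|_sigma for i <= j, their slopes 1/k_j
   strictly decrease, and they telescope back to C.

   For tightness, let c = a + b be an X2-decomposition. The soft-thresholding split at level t,
   with singular values (s_i - t)^+ and min(s_i, t), has nuclear norm depending continuously on t,
   so some t matches |a|_*. That split is aligned, <b_t, a_t> = |a_t|_* |b_t|_sigma, and the duality
   <x, z> <= |x|_* |z|_sigma then forces a = a_t: otherwise b would be strictly longer than b_t.
   Finally the threshold split is an XY-decomposition, certified by the partial isometry onto the
   singular directions above t. *)

theory Submission
  imports Defs "Jordan_Normal_Form.Spectral_Radius" "Jordan_Normal_Form.Gram_Schmidt"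
begin

lemma cT_carrier[simp]: "A \<in> carrier_mat m n \<Longrightarrow> cT A \<in> carrier_mat n m"
  unfolding cT_def by auto

lemma cT_dim[simp]: "dim_row (cT A) = dim_col A" "dim_col (cT A) = dim_row A"
  unfolding cT_def by auto

lemma cT_index[simp]: "i < dim_col A \<Longrightarrow> j < dim_row A \<Longrightarrow> cT A $$ (i,j) = cnj (A $$ (j,i))"
  unfolding cT_def by auto

lemma cT_cT[simp]: "cT (cT A) = A"
  by (rule eq_matI) auto

lemma cT_one[simp]: "cT (1\<^sub>m n) = 1\<^sub>m n"
  by (rule eq_matI) auto

lemma cT_mult: "A \<in> carrier_mat m k \<Longrightarrow> B \<in> carrier_mat k n \<Longrightarrow> cT (A * B) = cT B * cT A"
  by (rule eq_matI) (auto simp: scalar_prod_def cnj_sum mult.commute intro!: sum.cong)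

lemma cT_minus: "A \<in> carrier_mat m n \<Longrightarrow> B \<in> carrier_mat m n \<Longrightarrow> cT (A - B) = cT A - cT B"
  by (rule eq_matI) auto

lemma index_mult_mat_lessThan: "A \<in> carrier_mat m k \<Longrightarrow> B \<in> carrier_mat k n \<Longrightarrow> i < m \<Longrightarrow> j < n \<Longrightarrow>
    (A * B) $$ (i,j) = (\<Sum>l<k. A $$ (i,l) * B $$ (l,j))"
  by (simp add: scalar_prod_def atLeast0LessThan)

lemma mtrace_mult_comm: "A \<in> carrier_mat m n \<Longrightarrow> B \<in> carrier_mat n m \<Longrightarrow> mtrace (A * B) = mtrace (B * A)"
  unfolding mtrace_def by (simp add: scalar_prod_def atLeast0LessThan sum.swap[of _ "{..<n}"] mult.commute)

lemma innerV_eq_sum: "A \<in> carrier_mat m n \<Longrightarrow> B \<in> carrier_mat m n \<Longrightarrow>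
    innerV A B = (\<Sum>i<m. \<Sum>j<n. Re (A $$ (i,j) * cnj (B $$ (i,j))))"
  unfolding innerV_def mtrace_def by (simp add: scalar_prod_def atLeast0LessThan Re_sum)

lemma mult_cnj_eq_cmod_sq: "z * cnj z = (complex_of_real (cmod z))\<^sup>2" "cnj z * z = (complex_of_real (cmod z))\<^sup>2"
  by (metis complex_norm_square of_real_power, metis complex_norm_square of_real_power mult.commute)

definition cinner :: "nat \<Rightarrow> complex vec \<Rightarrow> complex vec \<Rightarrow> complex" where
  "cinner n x y = (\<Sum>i<n. x $ i * cnj (y $ i))"

definition quad_form :: "nat \<Rightarrow> complex mat \<Rightarrow> complex vec \<Rightarrow> complex" where
  "quad_form n P v = (\<Sum>i<n. \<Sum>j<n. cnj (v $ i) * P $$ (i,j) * v $ j)"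

lemma cinner_adjoint: assumes "A \<in> carrier_mat m n" "x \<in> carrier_vec n" "y \<in> carrier_vec m"
  shows "cinner m (A *\<^sub>v x) y = cinner n x (cT A *\<^sub>v y)"
proof -
  have "cinner m (A *\<^sub>v x) y = (\<Sum>i<m. \<Sum>l<n. A $$ (i,l) * x $ l * cnj (y $ i))"
    unfolding cinner_def using assms by (simp add: scalar_prod_def atLeast0LessThan sum_distrib_right)
  also have "\<dots> = (\<Sum>l<n. \<Sum>i<m. A $$ (i,l) * x $ l * cnj (y $ i))" by (rule sum.swap)
  also have "\<dots> = cinner n x (cT A *\<^sub>v y)"
    unfolding cinner_def using assms
    by (simp add: scalar_prod_def atLeast0LessThan sum_distrib_left cnj_sum mult_ac)
  finally show ?thesis .
qed

lemma quad_form_eq_cinner: "P \<in> carrier_mat n n \<Longrightarrow> v \<in> carrier_vec n \<Longrightarrow> quad_form n P v = cinner n (P *\<^sub>v v) v"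
  unfolding quad_form_def cinner_def by (simp add: scalar_prod_def atLeast0LessThan sum_distrib_left mult_ac)

lemma cinner_self: "cinner n v v = complex_of_real (\<Sum>i<n. (cmod (v $ i))\<^sup>2)"
  unfolding cinner_def of_real_sum by (intro sum.cong) (auto simp: mult_cnj_eq_cmod_sq)

lemma cinner_commute: "cinner n x y = cnj (cinner n y x)"
  unfolding cinner_def by (simp add: cnj_sum mult.commute)

lemma cinner_add_left: "x \<in> carrier_vec n \<Longrightarrow> z \<in> carrier_vec n \<Longrightarrow> cinner n (x + z) y = cinner n x y + cinner n z y"
  unfolding cinner_def by (simp add: distrib_right sum.distrib)

lemma cinner_add_right: "y \<in> carrier_vec n \<Longrightarrow> z \<in> carrier_vec n \<Longrightarrow> cinner n x (y + z) = cinner n x y + cinner n x z"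
  unfolding cinner_def by (simp add: distrib_left sum.distrib)

lemma cinner_smult_left: "x \<in> carrier_vec n \<Longrightarrow> cinner n (c \<cdot>\<^sub>v x) y = c * cinner n x y"
  unfolding cinner_def by (simp add: sum_distrib_left mult_ac)

lemma cinner_smult_right: "y \<in> carrier_vec n \<Longrightarrow> cinner n x (c \<cdot>\<^sub>v y) = cnj c * cinner n x y"
  unfolding cinner_def by (simp add: sum_distrib_left mult_ac)

lemma cinner_self_eq_0_iff: "x \<in> carrier_vec n \<Longrightarrow> cinner n x x = 0 \<longleftrightarrow> x = 0\<^sub>v n"
proof -
  assume x: "x \<in> carrier_vec n"
  have "cinner n x x = 0 \<longleftrightarrow> (\<Sum>i<n. (cmod (x $ i))\<^sup>2) = 0" by (simp only: cinner_self of_real_eq_0_iff)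
  also have "\<dots> \<longleftrightarrow> (\<forall>i\<in>{..<n}. (cmod (x $ i))\<^sup>2 = 0)" by (rule sum_nonneg_eq_0_iff) auto
  also have "\<dots> \<longleftrightarrow> x = 0\<^sub>v n" using x by (auto simp: vec_eq_iff)
  finally show ?thesis .
qed

lemma vnorm_nonneg[simp]: "vnorm v \<ge> 0"
  unfolding vnorm_def by (simp add: sum_nonneg)

lemma vnorm_sq: "v \<in> carrier_vec n \<Longrightarrow> (vnorm v)\<^sup>2 = (\<Sum>i<n. (cmod (v $ i))\<^sup>2)"
  unfolding vnorm_def by (simp add: sum_nonneg)

lemma vnorm_sq_eq_cinner: "v \<in> carrier_vec n \<Longrightarrow> complex_of_real ((vnorm v)\<^sup>2) = cinner n v v"
  by (simp add: vnorm_sq cinner_self)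

lemma vnorm_smult: "vnorm (c \<cdot>\<^sub>v v) = cmod c * vnorm v"
proof -
  have "(vnorm (c \<cdot>\<^sub>v v))\<^sup>2 = (cmod c * vnorm v)\<^sup>2"
    using vnorm_sq[of v "dim_vec v"] vnorm_sq[of "c \<cdot>\<^sub>v v" "dim_vec v"]
    by (simp add: power_mult_distrib norm_mult sum_distrib_left)
  thus ?thesis by (simp add: power2_eq_iff_nonneg)
qed

lemma vnorm_unit_vec: "j < n \<Longrightarrow> vnorm (unit_vec n j) = 1"
proof -
  assume j: "j < n"
  have "(vnorm (unit_vec n j))\<^sup>2 = (\<Sum>i<n. if i = j then 1 else 0)"
    unfolding vnorm_sq[OF unit_vec_carrier] by (rule sum.cong) (auto simp: unit_vec_def)
  hence "(vnorm (unit_vec n j))\<^sup>2 = 1\<^sup>2" using j by simp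
  thus ?thesis using power2_eq_iff_nonneg[of "vnorm (unit_vec n j)" 1] by simp
qed

lemma vnorm_mult_sq: assumes "B \<in> carrier_mat m n" "w \<in> carrier_vec n"
  shows "complex_of_real ((vnorm (B *\<^sub>v w))\<^sup>2) = quad_form n (cT B * B) w"
proof -
  have "quad_form n (cT B * B) w = cinner n ((cT B * B) *\<^sub>v w) w"
    using assms by (intro quad_form_eq_cinner) auto
  also have "(cT B * B) *\<^sub>v w = cT B *\<^sub>v (B *\<^sub>v w)"
    using assms by (metis assoc_mult_mat_vec cT_carrier)
  also have "cinner n (cT B *\<^sub>v (B *\<^sub>v w)) w = cnj (cinner m (B *\<^sub>v w) (B *\<^sub>v w))"
    using assms by (simp add: cinner_commute[of n _ w] cinner_adjoint)
  also have "\<dots> = complex_of_real ((vnorm (B *\<^sub>v w))\<^sup>2)"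
    using assms by (simp add: vnorm_sq_eq_cinner[symmetric])
  finally show ?thesis by simp
qed

lemma cinner_cauchy_schwarz: assumes x: "x \<in> carrier_vec n" and y: "y \<in> carrier_vec n"
  shows "Re (cinner n x y) \<le> vnorm x * vnorm y"
proof -
  define a b where "a = vnorm x" and "b = vnorm y"
  have a: "a \<ge> 0" and b: "b \<ge> 0" unfolding a_def b_def by auto
  have xx: "cinner n x x = complex_of_real (a\<^sup>2)" and yy: "cinner n y y = complex_of_real (b\<^sup>2)"
    unfolding a_def b_def using vnorm_sq_eq_cinner[OF x] vnorm_sq_eq_cinner[OF y] by simp_all
  define z where "z = complex_of_real b \<cdot>\<^sub>v x + complex_of_real (- a) \<cdot>\<^sub>v y"
  have "cinner n z z = complex_of_real b * complex_of_real b * cinner n x x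
      + complex_of_real b * complex_of_real (-a) * cinner n x y
      + complex_of_real (-a) * complex_of_real b * cinner n y x
      + complex_of_real (-a) * complex_of_real (-a) * cinner n y y"
    unfolding z_def using x y
    by (simp add: cinner_add_left cinner_add_right cinner_smult_left cinner_smult_right algebra_simps)
  hence "Re (cinner n z z) = b * b * a\<^sup>2 - b * a * Re (cinner n x y) - a * b * Re (cinner n y x) + a * a * b\<^sup>2"
    unfolding xx yy by simp
  also have "Re (cinner n y x) = Re (cinner n x y)" using cinner_commute[of n y x] by simp
  finally have "Re (cinner n z z) = 2 * (a * b) * (a * b - Re (cinner n x y))"
    by (simp add: algebra_simps power2_eq_square)
  moreover have "Re (cinner n z z) \<ge> 0" unfolding cinner_self by (simp add: sum_nonneg)
  ultimately have ge: "(a * b) * (a * b - Re (cinner n x y)) \<ge> 0" by simp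
  show ?thesis
  proof (cases "a * b = 0")
    case True
    hence "x = 0\<^sub>v n \<or> y = 0\<^sub>v n"
      using xx yy cinner_self_eq_0_iff[OF x] cinner_self_eq_0_iff[OF y] by auto
    hence "cinner n x y = 0" unfolding cinner_def using x y by auto
    thus ?thesis unfolding a_def[symmetric] b_def[symmetric] using a b by simp
  next
    case False
    hence "a * b > 0" using a b by simp
    thus ?thesis using ge unfolding a_def[symmetric] b_def[symmetric] by (simp add: zero_le_mult_iff)
  qed
qed

lemma unitary_matD:
  "unitary_mat n U \<Longrightarrow> U \<in> carrier_mat n n"
  "unitary_mat n U \<Longrightarrow> cT U * U = 1\<^sub>m n"
  "unitary_mat n U \<Longrightarrow> U * cT U = 1\<^sub>m n"
  unfolding unitary_mat_def by auto

lemma unitary_matI: "R \<in> carrier_mat n n \<Longrightarrow> cT R * R = 1\<^sub>m n \<Longrightarrow> unitary_mat n R"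
  using mat_mult_left_right_inverse[of "cT R" n R] unfolding unitary_mat_def by auto

lemma unitary_mat_mult: assumes R: "unitary_mat n R" and V: "unitary_mat n V" shows "unitary_mat n (R * V)"
proof -
  have Rc: "R \<in> carrier_mat n n" and Vc: "V \<in> carrier_mat n n" using R V unitary_matD by auto
  have "cT (R * V) * (R * V) = cT V * ((cT R * R) * V)"
    using Rc Vc by (simp add: cT_mult[OF Rc Vc] assoc_mult_mat[of _ n n _ n _ n])
  also have "\<dots> = 1\<^sub>m n" using Vc unitary_matD(2)[OF R] unitary_matD(2)[OF V] by simp
  finally show ?thesis using Rc Vc by (intro unitary_matI) auto
qed

lemma unitary_mat_col:
  assumes U: "unitary_mat n U" and j: "j < n"
  shows "cT U *\<^sub>v col U j = unit_vec n j" and "col U j \<in> carrier_vec n"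
proof -
  have Uc: "U \<in> carrier_mat n n" using U unitary_matD by auto
  show "col U j \<in> carrier_vec n" using Uc by (simp add: carrier_vecI)
  show "cT U *\<^sub>v col U j = unit_vec n j"
  proof (rule eq_vecI)
    fix i assume "i < dim_vec (unit_vec n j)"
    hence i: "i < n" by simp
    have "(cT U *\<^sub>v col U j) $ i = (cT U * U) $$ (i,j)" using Uc i j by simp
    thus "(cT U *\<^sub>v col U j) $ i = unit_vec n j $ i" using unitary_matD(2)[OF U] i j by (simp add: unit_vec_def)
  qed (use Uc in auto)
qed

lemma vnorm_adjoint_unitary: assumes U: "unitary_mat n U" and v: "v \<in> carrier_vec n"
  shows "vnorm (cT U *\<^sub>v v) = vnorm v"
proof -
  have Uc: "U \<in> carrier_mat n n" using U unitary_matD by auto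
  have "complex_of_real ((vnorm (cT U *\<^sub>v v))\<^sup>2) = quad_form n (U * cT U) v"
    using vnorm_mult_sq[OF cT_carrier[OF Uc] v] by simp
  also have "\<dots> = complex_of_real ((vnorm v)\<^sup>2)"
    using v by (simp add: unitary_matD(3)[OF U] quad_form_eq_cinner vnorm_sq_eq_cinner[symmetric])
  finally have "(vnorm (cT U *\<^sub>v v))\<^sup>2 = (vnorm v)\<^sup>2" using of_real_eq_iff by blast
  thus ?thesis by (simp add: power2_eq_iff_nonneg)
qed

lemma vnorm_unitary_col: "unitary_mat n U \<Longrightarrow> j < n \<Longrightarrow> vnorm (col U j) = 1"
  using vnorm_adjoint_unitary unitary_mat_col vnorm_unit_vec by metis

definition normalize_vec :: "complex vec \<Rightarrow> complex vec" where
  "normalize_vec w = complex_of_real (1 / vnorm w) \<cdot>\<^sub>v w"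

lemma cscalar_prod_self: "w \<in> carrier_vec n \<Longrightarrow> w \<bullet>c w = complex_of_real (\<Sum>l<n. (cmod (w $ l))\<^sup>2)"
  using cinner_self[of n w] by (simp add: scalar_prod_def atLeast0LessThan cinner_def)

lemma unitary_mat_of_corthogonal:
  assumes ws: "set ws \<subseteq> carrier_vec n" "corthogonal ws" "length ws = n"
  shows "unitary_mat n (mat_of_cols n (map normalize_vec ws))"
proof -
  define R where "R = mat_of_cols n (map normalize_vec ws)"
  have wsi: "i < n \<Longrightarrow> ws ! i \<in> carrier_vec n" for i using ws by auto
  have self: "ws ! i \<bullet>c ws ! i = complex_of_real ((vnorm (ws ! i))\<^sup>2)" if i: "i < n" for i
    using cscalar_prod_self[OF wsi[OF i]] vnorm_sq[OF wsi[OF i]] by simp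
  have vnorm_pos: "vnorm (ws ! i) > 0" if i: "i < n" for i
  proof -
    have "ws ! i \<bullet>c ws ! i \<noteq> 0" using corthogonalD[OF ws(2), of i i] i ws(3) by auto
    hence "vnorm (ws ! i) \<noteq> 0" using self[OF i] by auto
    thus ?thesis using vnorm_nonneg[of "ws ! i"] by linarith
  qed
  have R: "R \<in> carrier_mat n n" unfolding R_def using ws by auto
  have "cT R * R = 1\<^sub>m n"
  proof (rule eq_matI)
    fix i j assume "i < dim_row (1\<^sub>m n)" and "j < dim_col (1\<^sub>m n)"
    hence i: "i < n" and j: "j < n" by auto
    have "(cT R * R) $$ (i,j) = (\<Sum>l<n. cnj (R $$ (l,i)) * R $$ (l,j))"
      using R i j by (simp add: scalar_prod_def atLeast0LessThan)
    also have "\<dots> = complex_of_real (1 / vnorm (ws ! i) * (1 / vnorm (ws ! j))) * (ws ! j \<bullet>c ws ! i)"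
      unfolding R_def normalize_vec_def using i j ws wsi[OF i] wsi[OF j]
      by (simp add: mat_of_cols_index scalar_prod_def atLeast0LessThan sum_distrib_left mult_ac)
    also have "\<dots> = 1\<^sub>m n $$ (i,j)"
    proof (cases "i = j")
      case True
      thus ?thesis using self[OF j] vnorm_pos[OF j] i by (simp add: power2_eq_square)
    next
      case False
      have "ws ! j \<bullet>c ws ! i = 0" using corthogonalD[OF ws(2), of j i] i j ws(3) False by auto
      thus ?thesis using False i j by simp
    qed
    finally show "(cT R * R) $$ (i,j) = 1\<^sub>m n $$ (i,j)" .
  qed (use R in auto)
  thus ?thesis using R unfolding R_def by (intro unitary_matI) auto
qed

lemma unitary_mat_with_first_col:
  assumes u: "u \<in> carrier_vec n" and nu: "vnorm u = 1"
  shows "\<exists>R. unitary_mat n R \<and> col R 0 = u"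
proof -
  interpret cof_vec_space n "TYPE(complex)" .
  have n: "n > 0" using u nu unfolding vnorm_def by (cases n) auto
  have u0: "u \<noteq> 0\<^sub>v n" using nu unfolding vnorm_def by auto
  define b where "b = basis_completion u"
  from basis_completion[OF u u0, folded b_def]
  have dist_b: "distinct b" and indep: "\<not> lin_dep (set b)" and bc: "set b \<subseteq> carrier_vec n"
    and hdb: "hd b = u" and len_b: "length b = n" by auto
  from hdb len_b n obtain vs where bv: "b = u # vs" by (cases b) auto
  define ws where "ws = gram_schmidt n b"
  from gram_schmidt_result[OF bc dist_b indep refl, folded ws_def]
  have ws: "set ws \<subseteq> carrier_vec n" "corthogonal ws" "length ws = n" by (auto simp: len_b)
  have "hd ws = u" unfolding ws_def bv using u by simp
  hence "ws ! 0 = u" using ws(3) n by (cases ws) auto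
  hence "col (mat_of_cols n (map normalize_vec ws)) 0 = u"
    using n ws(3) u nu unfolding normalize_vec_def by simp
  thus ?thesis using unitary_mat_of_corthogonal[OF ws] by blast
qed

section \<open>Real diagonal matrices and the spectral theorem\<close>

definition real_diag_mat :: "nat \<Rightarrow> (nat \<Rightarrow> real) \<Rightarrow> complex mat" where
  "real_diag_mat n d = mat n n (\<lambda>(i,j). if i = j then complex_of_real (d i) else 0)"

lemma real_diag_mat_carrier[simp]: "real_diag_mat n d \<in> carrier_mat n n"
  unfolding real_diag_mat_def by auto

lemma real_diag_mat_dim[simp]: "dim_row (real_diag_mat n d) = n" "dim_col (real_diag_mat n d) = n"
  unfolding real_diag_mat_def by auto

lemma real_diag_mat_index[simp]:
  "i < n \<Longrightarrow> j < n \<Longrightarrow> real_diag_mat n d $$ (i,j) = (if i = j then complex_of_real (d i) else 0)"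
  unfolding real_diag_mat_def by auto

lemma cT_real_diag_mat[simp]: "cT (real_diag_mat n d) = real_diag_mat n d"
  by (rule eq_matI) auto

lemma mult_real_diag_mat: assumes "A \<in> carrier_mat m n"
  shows "A * real_diag_mat n d = mat m n (\<lambda>(i,l). A $$ (i,l) * complex_of_real (d l))"
proof (rule eq_matI)
  fix i j assume "i < dim_row (mat m n (\<lambda>(i,l). A $$ (i,l) * complex_of_real (d l)))"
     "j < dim_col (mat m n (\<lambda>(i,l). A $$ (i,l) * complex_of_real (d l)))"
  hence i: "i < m" and j: "j < n" by auto
  have "(A * real_diag_mat n d) $$ (i,j) = (\<Sum>l<n. if l = j then A $$ (i,l) * complex_of_real (d l) else 0)"
    using assms i j by (simp add: scalar_prod_def atLeast0LessThan if_distrib[of "\<lambda>x. _ * x"] cong: if_cong)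
  thus "(A * real_diag_mat n d) $$ (i,j) = mat m n (\<lambda>(i,l). A $$ (i,l) * complex_of_real (d l)) $$ (i,j)"
    using i j by simp
qed (use assms in auto)

lemma real_diag_mat_mult: "real_diag_mat n a * real_diag_mat n b = real_diag_mat n (\<lambda>i. a i * b i)"
  unfolding mult_real_diag_mat[OF real_diag_mat_carrier] by (rule eq_matI) auto

lemma quad_form_real_diag_mat: assumes w: "w \<in> carrier_vec n"
  shows "quad_form n (real_diag_mat n a) w = complex_of_real (\<Sum>i<n. a i * (cmod (w $ i))\<^sup>2)"
proof -
  have "quad_form n (real_diag_mat n a) w = (\<Sum>i<n. complex_of_real (a i) * (cnj (w $ i) * w $ i))"
    unfolding quad_form_def by (intro sum.cong) (auto simp: if_distrib[of "\<lambda>x. _ * x * _"] cong: if_cong)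
  thus ?thesis unfolding of_real_sum by (simp add: mult_cnj_eq_cmod_sq)
qed

lemma index_conj_real_diag_mat:
  assumes U: "U \<in> carrier_mat m n" and V: "V \<in> carrier_mat k n" and i: "i < m" and j: "j < k"
  shows "(U * real_diag_mat n d * cT V) $$ (i,j) = (\<Sum>l<n. U $$ (i,l) * complex_of_real (d l) * cnj (V $$ (j,l)))"
  using assms by (simp add: mult_real_diag_mat[OF U] scalar_prod_def atLeast0LessThan)


lemma unit_eigenvector_exists: assumes H: "H \<in> carrier_mat n n" and n: "0 < n"
  shows "\<exists>e u. u \<in> carrier_vec n \<and> vnorm u = 1 \<and> H *\<^sub>v u = e \<cdot>\<^sub>v u"
proof -
  obtain e where "eigenvalue H e" using spectrum_non_empty[OF H] n unfolding spectrum_def by auto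
  then obtain v where v: "v \<in> carrier_vec n" "v \<noteq> 0\<^sub>v n" "H *\<^sub>v v = e \<cdot>\<^sub>v v"
    unfolding eigenvalue_def eigenvector_def using H by auto
  have "vnorm v \<noteq> 0"
    using vnorm_sq_eq_cinner[OF v(1)] cinner_self_eq_0_iff[OF v(1)] v(2) by auto
  hence vpos: "vnorm v > 0" using vnorm_nonneg[of v] by linarith
  define u where "u = complex_of_real (1 / vnorm v) \<cdot>\<^sub>v v"
  have "u \<in> carrier_vec n" unfolding u_def using v by simp
  moreover have "vnorm u = 1" unfolding u_def vnorm_smult using vpos by (simp add: norm_divide)
  moreover have "H *\<^sub>v u = e \<cdot>\<^sub>v u" unfolding u_def using v H
    by (simp add: mult_mat_vec smult_smult_assoc mult.commute)
  ultimately show ?thesis by blast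
qed

lemma unitary_conj_first_col:
  assumes H: "H \<in> carrier_mat n n" and R: "unitary_mat n R" and Ru: "col R 0 = u"
    and u: "u \<in> carrier_vec n" and Hu: "H *\<^sub>v u = e \<cdot>\<^sub>v u" and i: "i < n"
  shows "(cT R * H * R) $$ (i,0) = (if i = 0 then e else 0)"
proof -
  have Rc: "R \<in> carrier_mat n n" using R unitary_matD by auto
  have n: "0 < n" using i by simp
  have "(cT R * H * R) $$ (i,0) = (cT R * (H * R)) $$ (i,0)"
    using Rc H by (simp add: assoc_mult_mat[of _ n n _ n _ n])
  also have "\<dots> = (cT R *\<^sub>v col (H * R) 0) $ i" using Rc H i n by simp
  also have "col (H * R) 0 = H *\<^sub>v col R 0" using col_mult2[OF H Rc n] .
  also have "(cT R *\<^sub>v (H *\<^sub>v col R 0)) $ i = e * (cT R *\<^sub>v col R 0) $ i"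
    using Rc H i u Hu Ru by (simp add: mult_mat_vec)
  also have "(cT R *\<^sub>v col R 0) = unit_vec n 0" using unitary_mat_col(1)[OF R n] .
  finally show ?thesis using i by (simp add: unit_vec_def)
qed

definition direct_sum_one :: "nat \<Rightarrow> complex mat \<Rightarrow> complex mat" where
  "direct_sum_one k U = mat (Suc k) (Suc k)
     (\<lambda>(i,j). if i = 0 \<and> j = 0 then 1 else if i = 0 \<or> j = 0 then 0 else U $$ (i - 1, j - 1))"

lemma direct_sum_one_carrier[simp]: "direct_sum_one k U \<in> carrier_mat (Suc k) (Suc k)"
  unfolding direct_sum_one_def by auto

lemma direct_sum_one_dim[simp]:
  "dim_row (direct_sum_one k U) = Suc k" "dim_col (direct_sum_one k U) = Suc k"
  unfolding direct_sum_one_def by auto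

lemma direct_sum_one_index:
  "i < Suc k \<Longrightarrow> j < Suc k \<Longrightarrow> direct_sum_one k U $$ (i,j) =
     (if i = 0 \<and> j = 0 then 1 else if i = 0 \<or> j = 0 then 0 else U $$ (i - 1, j - 1))"
  unfolding direct_sum_one_def by simp

lemma unitary_mat_direct_sum_one: assumes U: "unitary_mat k U"
  shows "unitary_mat (Suc k) (direct_sum_one k U)"
proof (rule unitary_matI)
  let ?U1 = "direct_sum_one k U"
  have Uc: "U \<in> carrier_mat k k" using U unitary_matD by auto
  show "cT ?U1 * ?U1 = 1\<^sub>m (Suc k)"
  proof (rule eq_matI)
    fix i j assume "i < dim_row (1\<^sub>m (Suc k))" "j < dim_col (1\<^sub>m (Suc k))"
    hence i: "i < Suc k" and j: "j < Suc k" by auto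
    have "(cT ?U1 * ?U1) $$ (i,j)
        = cnj (?U1 $$ (0,i)) * ?U1 $$ (0,j) + (\<Sum>l<k. cnj (?U1 $$ (Suc l,i)) * ?U1 $$ (Suc l,j))"
      using index_mult_mat_lessThan[of "cT ?U1" "Suc k" "Suc k" ?U1 "Suc k" i j] i j
      by (simp add: sum.lessThan_Suc_shift del: sum.lessThan_Suc)
    also have "\<dots> = 1\<^sub>m (Suc k) $$ (i,j)"
    proof (cases "i = 0 \<or> j = 0")
      case True thus ?thesis using i j by (auto simp: direct_sum_one_index)
    next
      case False
      then obtain i' j' where ij: "i = Suc i'" "j = Suc j'" by (meson not0_implies_Suc)
      have "(\<Sum>l<k. cnj (?U1 $$ (Suc l,i)) * ?U1 $$ (Suc l,j)) = (cT U * U) $$ (i',j')"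
        using Uc i j ij by (simp add: direct_sum_one_index scalar_prod_def atLeast0LessThan)
      thus ?thesis using unitary_matD(2)[OF U] i j ij by (simp add: direct_sum_one_index)
    qed
    finally show "(cT ?U1 * ?U1) $$ (i,j) = 1\<^sub>m (Suc k) $$ (i,j)" .
  qed auto
qed auto

lemma direct_sum_one_diagonalizes:
  assumes H1: "H1 \<in> carrier_mat (Suc k) (Suc k)" and U': "U' \<in> carrier_mat k k"
    and col0: "\<And>i. i < Suc k \<Longrightarrow> H1 $$ (i,0) = (if i = 0 then complex_of_real e else 0)"
    and row0: "\<And>j. j < Suc k \<Longrightarrow> H1 $$ (0,j) = (if j = 0 then complex_of_real e else 0)"
    and block: "\<And>i j. i < k \<Longrightarrow> j < k \<Longrightarrow> H1 $$ (Suc i, Suc j) = (U' * real_diag_mat k d' * cT U') $$ (i,j)"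
  shows "H1 = direct_sum_one k U' * real_diag_mat (Suc k) (\<lambda>i. if i = 0 then e else d' (i - 1))
    * cT (direct_sum_one k U')"
  (is "_ = ?U1 * real_diag_mat (Suc k) ?d * cT ?U1")
proof (rule eq_matI)
  fix i j assume "i < dim_row (?U1 * real_diag_mat (Suc k) ?d * cT ?U1)"
    "j < dim_col (?U1 * real_diag_mat (Suc k) ?d * cT ?U1)"
  hence i: "i < Suc k" and j: "j < Suc k" by auto
  have "(?U1 * real_diag_mat (Suc k) ?d * cT ?U1) $$ (i,j)
      = ?U1 $$ (i,0) * complex_of_real (?d 0) * cnj (?U1 $$ (j,0))
        + (\<Sum>l<k. ?U1 $$ (i,Suc l) * complex_of_real (?d (Suc l)) * cnj (?U1 $$ (j,Suc l)))"
    using index_conj_real_diag_mat[OF _ _ i j] by (simp add: sum.lessThan_Suc_shift del: sum.lessThan_Suc)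
  also have "\<dots> = H1 $$ (i,j)"
  proof (cases "i = 0 \<or> j = 0")
    case True thus ?thesis using i j col0 row0 by (auto simp: direct_sum_one_index)
  next
    case False
    then obtain i' j' where ij: "i = Suc i'" "j = Suc j'" by (meson not0_implies_Suc)
    have "(\<Sum>l<k. ?U1 $$ (i,Suc l) * complex_of_real (?d (Suc l)) * cnj (?U1 $$ (j,Suc l)))
        = (U' * real_diag_mat k d' * cT U') $$ (i',j')"
      using index_conj_real_diag_mat[OF U' U', of i' j' d'] i j ij by (simp add: direct_sum_one_index)
    thus ?thesis using block[of i' j'] i j ij by (simp add: direct_sum_one_index)
  qed
  finally show "H1 $$ (i,j) = (?U1 * real_diag_mat (Suc k) ?d * cT ?U1) $$ (i,j)" by simp
qed (use H1 in auto)


lemma unitary_conj_cancel: assumes R: "unitary_mat n R" and H: "H \<in> carrier_mat n n"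
  shows "R * (cT R * H * R) * cT R = H"
proof -
  have Rc: "R \<in> carrier_mat n n" using R unitary_matD by auto
  have "R * (cT R * H * R) = (R * cT R) * (H * R)"
    using Rc H by (simp add: assoc_mult_mat[of _ n n _ n _ n])
  also have "\<dots> = H * R" using unitary_matD(3)[OF R] H Rc by simp
  finally have "R * (cT R * H * R) * cT R = H * (R * cT R)"
    using Rc H by (simp add: assoc_mult_mat[of _ n n _ n _ n])
  thus ?thesis using unitary_matD(3)[OF R] H by simp
qed

lemma cT_conj: assumes R: "R \<in> carrier_mat n k" and H: "H \<in> carrier_mat n n"
  shows "cT (cT R * H * R) = cT R * cT H * R"
proof -
  have "cT R * H \<in> carrier_mat k n" using mult_carrier_mat[OF cT_carrier[OF R] H] .
  from cT_mult[OF this R] have "cT (cT R * H * R) = cT R * cT (cT R * H)" by simp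
  also have "cT (cT R * H) = cT H * R" using cT_mult[OF cT_carrier[OF R] H] by simp
  finally show ?thesis using R H by (simp add: assoc_mult_mat[of _ k n _ n _ k])
qed

lemma hermitian_first_col:
  assumes H: "H \<in> carrier_mat (Suc k) (Suc k)" and hH: "cT H = H"
    and col0: "\<And>i. i < Suc k \<Longrightarrow> H $$ (i,0) = (if i = 0 then e else 0)"
  shows "e = complex_of_real (Re e)" and "\<And>j. j < Suc k \<Longrightarrow> H $$ (0,j) = (if j = 0 then e else 0)"
proof -
  have "cnj (H $$ (0,0)) = H $$ (0,0)" using arg_cong[OF hH, of "\<lambda>A. A $$ (0,0)"] H by simp
  hence "e \<in> \<real>" using col0[of 0] by (simp add: Reals_cnj_iff)
  thus e: "e = complex_of_real (Re e)" by simp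
  show "H $$ (0,j) = (if j = 0 then e else 0)" if j: "j < Suc k" for j
    using arg_cong[OF hH, of "\<lambda>A. A $$ (0,j)"] H col0[OF j] j e by (auto simp: Reals_cnj_iff)
qed

lemma hermitian_lower_block:
  assumes H: "H \<in> carrier_mat (Suc k) (Suc k)" and hH: "cT H = H"
  shows "cT (mat k k (\<lambda>(i,j). H $$ (Suc i, Suc j))) = mat k k (\<lambda>(i,j). H $$ (Suc i, Suc j))"
proof (rule eq_matI)
  fix i j assume "i < dim_row (mat k k (\<lambda>(i,j). H $$ (Suc i, Suc j)))" "j < dim_col (mat k k (\<lambda>(i,j). H $$ (Suc i, Suc j)))"
  thus "cT (mat k k (\<lambda>(i,j). H $$ (Suc i, Suc j))) $$ (i,j) = mat k k (\<lambda>(i,j). H $$ (Suc i, Suc j)) $$ (i,j)"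
    using arg_cong[OF hH, of "\<lambda>A. A $$ (Suc i, Suc j)"] H by simp
qed auto

theorem hermitian_unitary_diagonalization:
  "H \<in> carrier_mat n n \<Longrightarrow> cT H = H \<Longrightarrow> \<exists>U d. unitary_mat n U \<and> H = U * real_diag_mat n d * cT U"
proof (induction n arbitrary: H)
  case 0
  have "unitary_mat 0 (1\<^sub>m 0)" unfolding unitary_mat_def by auto
  moreover have "H = 1\<^sub>m 0 * real_diag_mat 0 d * cT (1\<^sub>m 0)" for d using 0 by (intro eq_matI) auto
  ultimately show ?case by blast
next
  case (Suc k)
  note H = Suc.prems(1) and hH = Suc.prems(2)
  obtain e u where u: "u \<in> carrier_vec (Suc k)" "vnorm u = 1" and Hu: "H *\<^sub>v u = e \<cdot>\<^sub>v u"
    using unit_eigenvector_exists[OF H] by auto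
  obtain R where R: "unitary_mat (Suc k) R" and Ru: "col R 0 = u"
    using unitary_mat_with_first_col[OF u] by blast
  have Rc: "R \<in> carrier_mat (Suc k) (Suc k)" using R unitary_matD by auto
  define H1 where "H1 = cT R * H * R"
  have H1c: "H1 \<in> carrier_mat (Suc k) (Suc k)" unfolding H1_def using Rc H by auto
  have hH1: "cT H1 = H1" unfolding H1_def using cT_conj[OF Rc H] hH by simp
  have col0: "H1 $$ (i,0) = (if i = 0 then e else 0)" if "i < Suc k" for i
    unfolding H1_def using unitary_conj_first_col[OF H R Ru u(1) Hu that] .
  note e = hermitian_first_col(1)[OF H1c hH1 col0] and row0 = hermitian_first_col(2)[OF H1c hH1 col0]
  define H' where "H' = mat k k (\<lambda>(i,j). H1 $$ (Suc i, Suc j))"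
  have "cT H' = H'" unfolding H'_def using hermitian_lower_block[OF H1c hH1] .
  then obtain U' d' where U': "unitary_mat k U'" and H'eq: "H' = U' * real_diag_mat k d' * cT U'"
    using Suc.IH[of H'] unfolding H'_def by auto
  define U1 where "U1 = direct_sum_one k U'"
  define d where "d = (\<lambda>i. if i = 0 then Re e else d' (i - 1))"
  have block: "H1 $$ (Suc i, Suc j) = (U' * real_diag_mat k d' * cT U') $$ (i,j)" if "i < k" "j < k" for i j
    using arg_cong[OF H'eq, of "\<lambda>A. A $$ (i,j)"] that unfolding H'_def by simp
  have H1eq: "H1 = U1 * real_diag_mat (Suc k) d * cT U1" unfolding U1_def d_def
    using unitary_matD(1)[OF U'] col0 row0 e block
    by (intro direct_sum_one_diagonalizes[OF H1c]) auto
  have U1c: "U1 \<in> carrier_mat (Suc k) (Suc k)" unfolding U1_def by simp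
  have "H = R * H1 * cT R" unfolding H1_def using unitary_conj_cancel[OF R H] by simp
  also have "\<dots> = (R * U1) * real_diag_mat (Suc k) d * cT (R * U1)"
    unfolding H1eq using Rc U1c by (simp add: cT_mult[OF Rc U1c] assoc_mult_mat[of _ "Suc k" "Suc k" _ "Suc k" _ "Suc k"]
        mult_carrier_mat[of _ "Suc k" "Suc k" _ "Suc k"])
  finally show ?case using unitary_mat_mult[OF R unitary_mat_direct_sum_one[OF U']] U1_def by blast
qed


section \<open>Positive semidefinite square roots\<close>

lemma psd_mat_iff_quad_form: "psd_mat n P \<longleftrightarrow>
    P \<in> carrier_mat n n \<and> cT P = P \<and> (\<forall>v \<in> carrier_vec n. 0 \<le> Re (quad_form n P v))"
  unfolding psd_mat_def quad_form_def by simp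

lemma Re_quad_form_add_smult_image:
  assumes Pc: "P \<in> carrier_mat n n" and hP: "cT P = P" and v: "v \<in> carrier_vec n"
  defines "y \<equiv> P *\<^sub>v v"
  shows "Re (quad_form n P (v + complex_of_real t \<cdot>\<^sub>v y))
    = Re (quad_form n P v) + 2 * t * Re (cinner n y y) + t\<^sup>2 * Re (quad_form n P y)"
proof -
  let ?c = "complex_of_real t"
  have y: "y \<in> carrier_vec n" unfolding y_def using Pc v by simp
  have Py: "P *\<^sub>v y \<in> carrier_vec n" using Pc y by simp
  have "quad_form n P (v + ?c \<cdot>\<^sub>v y) = cinner n (P *\<^sub>v (v + ?c \<cdot>\<^sub>v y)) (v + ?c \<cdot>\<^sub>v y)"
    using quad_form_eq_cinner[OF Pc] v y by simp
  also have "P *\<^sub>v (v + ?c \<cdot>\<^sub>v y) = y + ?c \<cdot>\<^sub>v (P *\<^sub>v y)"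
    unfolding y_def using Pc v y by (simp add: mult_add_distrib_mat_vec mult_mat_vec y_def[symmetric])
  also have "cinner n (y + ?c \<cdot>\<^sub>v (P *\<^sub>v y)) (v + ?c \<cdot>\<^sub>v y)
    = cinner n y v + ?c * cinner n y y + ?c * cinner n (P *\<^sub>v y) v + ?c * ?c * cinner n (P *\<^sub>v y) y"
    using v y Py by (simp add: cinner_add_left cinner_add_right cinner_smult_left cinner_smult_right algebra_simps)
  also have "cinner n (P *\<^sub>v y) v = cinner n y y"
    using cinner_adjoint[OF Pc y v] hP unfolding y_def by simp
  also have "cinner n y v = quad_form n P v" using quad_form_eq_cinner[OF Pc v] cinner_adjoint[OF Pc v v] hP
    by (simp add: y_def cinner_commute[of n "P *\<^sub>v v" v])
  finally have "quad_form n P (v + ?c \<cdot>\<^sub>v y) = quad_form n P v + 2 * ?c * cinner n y y + ?c * ?c * quad_form n P y"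
    using quad_form_eq_cinner[OF Pc y] by (simp add: algebra_simps)
  thus ?thesis by (simp add: power2_eq_square)
qed

lemma psd_mat_quad_form_zero_imp_kernel:
  assumes P: "psd_mat n P" and v: "v \<in> carrier_vec n" and q0: "Re (quad_form n P v) = 0"
  shows "P *\<^sub>v v = 0\<^sub>v n"
proof -
  have Pc: "P \<in> carrier_mat n n" and hP: "cT P = P"
    and pos: "\<And>w. w \<in> carrier_vec n \<Longrightarrow> 0 \<le> Re (quad_form n P w)"
    using P unfolding psd_mat_iff_quad_form by auto
  define y where "y = P *\<^sub>v v"
  have y: "y \<in> carrier_vec n" unfolding y_def using Pc v by simp
  define a q where "a = Re (cinner n y y)" and "q = Re (quad_form n P y)"
  have q: "q \<ge> 0" unfolding q_def using pos[OF y] .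
  have a: "a \<ge> 0" unfolding a_def cinner_self by (simp add: sum_nonneg)
  \<comment> \<open>A negative multiple of y, taken small enough, would make the form negative.\<close>
  have "a = 0"
  proof (rule ccontr)
    assume "a \<noteq> 0"
    hence ap: "a > 0" using a by simp
    define t where "t = - a / (q + 1)"
    have "0 \<le> 2 * t * a + t\<^sup>2 * q"
      using pos[of "v + complex_of_real t \<cdot>\<^sub>v y"] v y Re_quad_form_add_smult_image[OF Pc hP v, of t] q0
      unfolding a_def q_def y_def by simp
    also have "2 * t * a + t\<^sup>2 * q = t * (a * (2 - q / (q + 1)))"
      unfolding t_def using q by (simp add: algebra_simps power2_eq_square)
    also have "\<dots> < 0"
    proof (rule mult_neg_pos)
      show "t < 0" unfolding t_def using ap q by simp
      have "q / (q + 1) < 1" using q by simp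
      thus "0 < a * (2 - q / (q + 1))" using ap by simp
    qed
    finally show False by simp
  qed
  hence "cinner n y y = 0" unfolding a_def by (simp add: cinner_self)
  thus ?thesis using cinner_self_eq_0_iff[OF y] unfolding y_def by simp
qed

lemma unitary_diagonalization_col_eigenvector:
  assumes U: "unitary_mat n U" and j: "j < n"
  shows "(U * real_diag_mat n d * cT U) *\<^sub>v col U j = complex_of_real (d j) \<cdot>\<^sub>v col U j"
proof -
  have Uc: "U \<in> carrier_mat n n" using U unitary_matD by auto
  have "(U * real_diag_mat n d * cT U) *\<^sub>v col U j = (U * real_diag_mat n d) *\<^sub>v (cT U *\<^sub>v col U j)"
    using Uc unitary_mat_col(2)[OF U j] by (intro assoc_mult_mat_vec[of _ n n]) auto
  also have "\<dots> = col (U * real_diag_mat n d) j"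
    unfolding unitary_mat_col(1)[OF U j] using Uc j by (intro eq_vecI) auto
  also have "\<dots> = complex_of_real (d j) \<cdot>\<^sub>v col U j"
    unfolding mult_real_diag_mat[OF Uc] using Uc j by (intro eq_vecI) auto
  finally show ?thesis .
qed

lemma psd_sqrt_difference_eigenvector:
  assumes P: "psd_mat n P" and Q: "psd_mat n Q" and PQ: "P * P = Q * Q"
    and x: "x \<in> carrier_vec n" and Dx: "(P - Q) *\<^sub>v x = complex_of_real d \<cdot>\<^sub>v x" and d: "d \<noteq> 0"
  shows "x = 0\<^sub>v n"
proof -
  have Pc: "P \<in> carrier_mat n n" and hP: "cT P = P" and Qc: "Q \<in> carrier_mat n n" and hQ: "cT Q = Q"
    and posP: "0 \<le> Re (quad_form n P x)" and posQ: "0 \<le> Re (quad_form n Q x)"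
    using P Q x unfolding psd_mat_iff_quad_form by auto
  define D where "D = P - Q"
  have Dc: "D \<in> carrier_mat n n" unfolding D_def using minus_carrier_mat[OF Qc] .
  have hD: "cT D = D" unfolding D_def using cT_minus[OF Pc Qc] hP hQ by simp
  have Px: "P *\<^sub>v x \<in> carrier_vec n" and Qx: "Q *\<^sub>v x \<in> carrier_vec n" using Pc Qc x by auto
  \<comment> \<open>P D + D Q = P^2 - Q^2 = 0\<close>
  have "P *\<^sub>v (D *\<^sub>v x) + D *\<^sub>v (Q *\<^sub>v x) = 0\<^sub>v n"
  proof -
    have "P *\<^sub>v (P *\<^sub>v x) = Q *\<^sub>v (Q *\<^sub>v x)" using PQ Pc Qc x by (metis assoc_mult_mat_vec)
    thus ?thesis unfolding D_def using Pc Qc x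
      by (intro eq_vecI) (auto simp: minus_mult_distrib_mat_vec mult_minus_distrib_mat_vec)
  qed
  hence "cinner n (P *\<^sub>v (D *\<^sub>v x)) x + cinner n (D *\<^sub>v (Q *\<^sub>v x)) x = 0"
    using cinner_add_left[of "P *\<^sub>v (D *\<^sub>v x)" n "D *\<^sub>v (Q *\<^sub>v x)" x] Pc Qc Dc x by (simp add: cinner_def)
  moreover have "cinner n (P *\<^sub>v (D *\<^sub>v x)) x = complex_of_real d * quad_form n P x"
    using Dx Pc x unfolding D_def by (simp add: mult_mat_vec cinner_smult_left quad_form_eq_cinner)
  moreover have "cinner n (D *\<^sub>v (Q *\<^sub>v x)) x = complex_of_real d * quad_form n Q x"
    using cinner_adjoint[OF Dc Qx x] Dx Qc x unfolding hD by (simp add: D_def cinner_smult_right quad_form_eq_cinner)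
  ultimately have "complex_of_real d * (quad_form n P x + quad_form n Q x) = 0" by (simp add: algebra_simps)
  hence "quad_form n P x + quad_form n Q x = 0" using d by simp
  hence "Re (quad_form n P x) + Re (quad_form n Q x) = 0" by (metis plus_complex.sel(1) zero_complex.sel(1))
  hence "P *\<^sub>v x = 0\<^sub>v n" and "Q *\<^sub>v x = 0\<^sub>v n"
    using posP posQ psd_mat_quad_form_zero_imp_kernel[OF P x] psd_mat_quad_form_zero_imp_kernel[OF Q x] by auto
  hence "complex_of_real d \<cdot>\<^sub>v x = 0\<^sub>v n" using Dx Pc Qc x by (simp add: minus_mult_distrib_mat_vec)
  thus ?thesis using d x by (auto simp: vec_eq_iff)
qed

lemma psd_sqrt_unique: assumes P: "psd_mat n P" and Q: "psd_mat n Q" and PQ: "P * P = Q * Q"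
  shows "P = Q"
proof -
  have Pc: "P \<in> carrier_mat n n" and Qc: "Q \<in> carrier_mat n n" and "cT (P - Q) = P - Q"
    using P Q cT_minus[of P n n Q] unfolding psd_mat_def by auto
  then obtain U d where U: "unitary_mat n U" and Deq: "P - Q = U * real_diag_mat n d * cT U"
    using hermitian_unitary_diagonalization[OF minus_carrier_mat[OF Qc]] by blast
  have "d j = 0" if j: "j < n" for j
  proof (rule ccontr)
    assume "d j \<noteq> 0"
    hence "col U j = 0\<^sub>v n"
      using psd_sqrt_difference_eigenvector[OF P Q PQ unitary_mat_col(2)[OF U j] _]
        unitary_diagonalization_col_eigenvector[OF U j] Deq by simp
    thus False using vnorm_unitary_col[OF U j] by (simp add: vnorm_def)
  qed
  hence "real_diag_mat n d = 0\<^sub>m n n" by (intro eq_matI) auto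
  hence "P - Q = 0\<^sub>m n n" unfolding Deq using unitary_matD(1)[OF U] by simp
  thus ?thesis using Pc Qc by (auto simp: mat_eq_iff)
qed

lemma msqrt_eqI: "psd_mat n P \<Longrightarrow> P * P = A \<Longrightarrow> msqrt A = P"
  unfolding msqrt_def using psd_sqrt_unique unfolding psd_mat_def by (intro the_equality) auto


section \<open>Nuclear and spectral norm through orthogonal columns\<close>

text \<open>A singular value decomposition with unnormalized left singular vectors: B U^* with U unitary
  and the columns of B pairwise orthogonal of lengths s, the singular values.\<close>

definition orth_cols :: "nat \<Rightarrow> nat \<Rightarrow> complex mat \<Rightarrow> (nat \<Rightarrow> real) \<Rightarrow> bool" where
  "orth_cols m n B s \<longleftrightarrow> B \<in> carrier_mat m n \<and> cT B * B = real_diag_mat n (\<lambda>i. (s i)\<^sup>2) \<and> (\<forall>i<n. 0 \<le> s i)"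

lemma orth_colsD:
  "orth_cols m n B s \<Longrightarrow> B \<in> carrier_mat m n"
  "orth_cols m n B s \<Longrightarrow> cT B * B = real_diag_mat n (\<lambda>i. (s i)\<^sup>2)"
  "orth_cols m n B s \<Longrightarrow> i < n \<Longrightarrow> 0 \<le> s i"
  unfolding orth_cols_def by auto

lemma vnorm_sq_mult_orth_cols: assumes B: "orth_cols m n B s" and w: "w \<in> carrier_vec n"
  shows "(vnorm (B *\<^sub>v w))\<^sup>2 = (\<Sum>i<n. (s i)\<^sup>2 * (cmod (w $ i))\<^sup>2)"
proof -
  have "complex_of_real ((vnorm (B *\<^sub>v w))\<^sup>2) = quad_form n (cT B * B) w"
    using vnorm_mult_sq[OF orth_colsD(1)[OF B] w] .
  also have "\<dots> = complex_of_real (\<Sum>i<n. (s i)\<^sup>2 * (cmod (w $ i))\<^sup>2)"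
    unfolding orth_colsD(2)[OF B] using quad_form_real_diag_mat[OF w] .
  finally show ?thesis using of_real_eq_iff by blast
qed

lemma vnorm_col_orth_cols: assumes B: "orth_cols m n B s" and l: "l < n"
  shows "vnorm (col B l) = s l"
proof -
  have "col B l = B *\<^sub>v unit_vec n l"
    using orth_colsD(1)[OF B] l
    by (intro eq_vecI) (auto simp: scalar_prod_def unit_vec_def atLeast0LessThan if_distrib[of "\<lambda>x. _ * x"] cong: if_cong)
  hence "(vnorm (col B l))\<^sup>2 = (\<Sum>i<n. (s i)\<^sup>2 * (cmod (unit_vec n l $ i))\<^sup>2)"
    using vnorm_sq_mult_orth_cols[OF B unit_vec_carrier] by simp
  also have "\<dots> = (\<Sum>i<n. if i = l then (s l)\<^sup>2 else 0)" by (rule sum.cong) (auto simp: unit_vec_def)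
  finally have "(vnorm (col B l))\<^sup>2 = (s l)\<^sup>2" using l by simp
  thus ?thesis using orth_colsD(3)[OF B l] by (simp add: power2_eq_iff_nonneg)
qed

lemma orth_cols_col_zero: assumes B: "orth_cols m n B s" and l: "l < n" and s0: "s l = 0" and i: "i < m"
  shows "B $$ (i,l) = 0"
proof -
  have Bc: "B \<in> carrier_mat m n" using orth_colsD(1)[OF B] .
  have cB: "col B l \<in> carrier_vec m" using Bc by (auto simp: carrier_vecI)
  have "cinner m (col B l) (col B l) = 0"
    using vnorm_sq_eq_cinner[OF cB] vnorm_col_orth_cols[OF B l] s0 by simp
  hence "col B l = 0\<^sub>v m" using cinner_self_eq_0_iff[OF cB] by simp
  hence "col B l $ i = 0" using i by simp
  thus ?thesis using i l Bc by simp
qed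

lemma mult_adjoint_mult_assoc:
  assumes B: "B \<in> carrier_mat m n" and X: "X \<in> carrier_mat k n" and Y: "Y \<in> carrier_mat n l"
  shows "X * cT B * (B * Y) = X * (cT B * B) * Y"
proof -
  have "X * cT B * (B * Y) = X * (cT B * (B * Y))"
    using assoc_mult_mat[OF X cT_carrier[OF B] mult_carrier_mat[OF B Y]] .
  also have "cT B * (B * Y) = (cT B * B) * Y" using assoc_mult_mat[OF cT_carrier[OF B] B Y] by simp
  finally show ?thesis using assoc_mult_mat[OF X mult_carrier_mat[OF cT_carrier[OF B] B] Y] by simp
qed

lemma orth_cols_factorization: assumes A: "A \<in> carrier_mat m n"
  shows "\<exists>B s U. orth_cols m n B s \<and> unitary_mat n U \<and> A = B * cT U"
proof -
  have "cT A * A \<in> carrier_mat n n" and "cT (cT A * A) = cT A * A"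
    using A cT_mult[OF cT_carrier[OF A] A] by auto
  then obtain U d where U: "unitary_mat n U" and AA: "cT A * A = U * real_diag_mat n d * cT U"
    using hermitian_unitary_diagonalization by blast
  have Uc: "U \<in> carrier_mat n n" using U unitary_matD by auto
  define B where "B = A * U"
  have Bc: "B \<in> carrier_mat m n" unfolding B_def using A Uc by simp
  have "cT B * B = cT U * (cT A * A) * U"
    unfolding B_def cT_mult[OF A Uc] using mult_adjoint_mult_assoc[OF A cT_carrier[OF Uc] Uc] .
  also have "\<dots> = (cT U * U) * real_diag_mat n d * (cT U * U)"
    unfolding AA using Uc by (simp add: assoc_mult_mat[of _ n n _ n _ n] mult_carrier_mat[of _ n n _ n])
  finally have BB: "cT B * B = real_diag_mat n d" using unitary_matD(2)[OF U] by simp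
  have dpos: "d i \<ge> 0" if i: "i < n" for i
  proof -
    have "complex_of_real (d i) = (\<Sum>l<m. cnj (B $$ (l,i)) * B $$ (l,i))"
      using arg_cong[OF BB, of "\<lambda>M. M $$ (i,i)"] Bc i by (simp add: scalar_prod_def atLeast0LessThan)
    also have "\<dots> = complex_of_real (\<Sum>l<m. (cmod (B $$ (l,i)))\<^sup>2)"
      unfolding of_real_sum by (intro sum.cong) (auto simp: mult_cnj_eq_cmod_sq)
    finally show ?thesis using of_real_eq_iff by (metis sum_nonneg zero_le_power2)
  qed
  have "real_diag_mat n (\<lambda>i. (sqrt (d i))\<^sup>2) = real_diag_mat n d" using dpos by (auto simp: mat_eq_iff)
  hence "orth_cols m n B (\<lambda>i. sqrt (d i))" unfolding orth_cols_def using Bc BB dpos by auto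
  moreover have "B * cT U = A" unfolding B_def
    using A Uc unitary_matD(3)[OF U] by (simp add: assoc_mult_mat[of _ m n _ n _ n])
  ultimately show ?thesis using U by metis
qed

lemma orth_cols_mult_real_diag_mat: assumes B: "orth_cols m n B s" and f: "\<And>i. i < n \<Longrightarrow> 0 \<le> f i"
  shows "orth_cols m n (B * real_diag_mat n f) (\<lambda>i. f i * s i)"
proof -
  have Bc: "B \<in> carrier_mat m n" using orth_colsD(1)[OF B] .
  have "cT (B * real_diag_mat n f) * (B * real_diag_mat n f) = real_diag_mat n f * (cT B * B) * real_diag_mat n f"
    unfolding cT_mult[OF Bc real_diag_mat_carrier] cT_real_diag_mat
    using mult_adjoint_mult_assoc[OF Bc real_diag_mat_carrier real_diag_mat_carrier] .
  also have "\<dots> = real_diag_mat n (\<lambda>i. (f i * s i)\<^sup>2)"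
    unfolding orth_colsD(2)[OF B] real_diag_mat_mult by (simp add: power2_eq_square mult_ac)
  finally show ?thesis unfolding orth_cols_def using Bc f orth_colsD(3)[OF B] by auto
qed


lemma conj_carrier: "U \<in> carrier_mat n k \<Longrightarrow> D \<in> carrier_mat k k \<Longrightarrow> U * D * cT U \<in> carrier_mat n n"
  by (metis cT_carrier mult_carrier_mat)

lemma unitary_conj_mult: assumes U: "unitary_mat n U" and D: "D \<in> carrier_mat n n" and E: "E \<in> carrier_mat n n"
  shows "(U * D * cT U) * (U * E * cT U) = U * (D * E) * cT U"
proof -
  have Uc: "U \<in> carrier_mat n n" using U unitary_matD by auto
  have "(U * D * cT U) * (U * E * cT U) = (U * D) * cT U * (U * (E * cT U))"
    using Uc D E by (simp add: assoc_mult_mat[of U n n E n _ n])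
  also have "\<dots> = (U * D) * (E * cT U)"
    using mult_adjoint_mult_assoc[OF Uc mult_carrier_mat[OF Uc D] mult_carrier_mat[OF E cT_carrier[OF Uc]]]
      unitary_matD(2)[OF U] Uc D by simp
  finally show ?thesis using Uc D E by (simp add: assoc_mult_mat[of _ n n _ n _ n])
qed

lemma psd_mat_unitary_conj_real_diag_mat:
  assumes U: "unitary_mat n U" and s: "\<And>i. i < n \<Longrightarrow> 0 \<le> s i"
  shows "psd_mat n (U * real_diag_mat n s * cT U)"
  unfolding psd_mat_iff_quad_form
proof (intro conjI ballI)
  have Uc: "U \<in> carrier_mat n n" using U unitary_matD by auto
  show "U * real_diag_mat n s * cT U \<in> carrier_mat n n" using conj_carrier[OF Uc] by simp
  show "cT (U * real_diag_mat n s * cT U) = U * real_diag_mat n s * cT U"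
    using cT_conj[OF cT_carrier[OF Uc] real_diag_mat_carrier] by simp
  fix v :: "complex vec" assume v: "v \<in> carrier_vec n"
  let ?D = "real_diag_mat n s"
  define w where "w = cT U *\<^sub>v v"
  have w: "w \<in> carrier_vec n" unfolding w_def using mult_mat_vec_carrier[OF cT_carrier[OF Uc] v] .
  have Dw: "?D *\<^sub>v w \<in> carrier_vec n" using mult_mat_vec_carrier[OF real_diag_mat_carrier w] .
  have "(U * ?D * cT U) *\<^sub>v v = (U * ?D) *\<^sub>v w"
    unfolding w_def using assoc_mult_mat_vec[OF mult_carrier_mat[OF Uc real_diag_mat_carrier] cT_carrier[OF Uc] v] .
  also have "\<dots> = U *\<^sub>v (?D *\<^sub>v w)" using assoc_mult_mat_vec[OF Uc real_diag_mat_carrier w] .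
  finally have "quad_form n (U * ?D * cT U) v = cinner n (U *\<^sub>v (?D *\<^sub>v w)) v"
    using quad_form_eq_cinner[OF conj_carrier[OF Uc real_diag_mat_carrier] v] by simp
  also have "\<dots> = quad_form n ?D w"
    unfolding cinner_adjoint[OF Uc Dw v] w_def[symmetric] using quad_form_eq_cinner[OF real_diag_mat_carrier w] by simp
  also have "\<dots> = complex_of_real (\<Sum>i<n. s i * (cmod (w $ i))\<^sup>2)" using quad_form_real_diag_mat[OF w] .
  finally have "Re (quad_form n (U * ?D * cT U) v) = (\<Sum>i<n. s i * (cmod (w $ i))\<^sup>2)"
    by (simp only: Re_complex_of_real)
  also have "\<dots> \<ge> 0" using s by (intro sum_nonneg) auto
  finally show "0 \<le> Re (quad_form n (U * ?D * cT U) v)" .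
qed

lemma mtrace_unitary_conj: assumes U: "unitary_mat n U" and D: "D \<in> carrier_mat n n"
  shows "mtrace (U * D * cT U) = mtrace D"
proof -
  have Uc: "U \<in> carrier_mat n n" using U unitary_matD by auto
  have "mtrace (U * D * cT U) = mtrace (cT U * (U * D))"
    using mtrace_mult_comm[OF mult_carrier_mat[OF Uc D] cT_carrier[OF Uc]] .
  also have "cT U * (U * D) = D"
    using assoc_mult_mat[OF cT_carrier[OF Uc] Uc D] unitary_matD(2)[OF U] D by simp
  finally show ?thesis .
qed

lemma nuclear_norm_orth_cols: assumes B: "orth_cols m n B s" and U: "unitary_mat n U"
  shows "nuclear_norm (B * cT U) = (\<Sum>i<n. s i)"
proof -
  have Bc: "B \<in> carrier_mat m n" using orth_colsD(1)[OF B] .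
  have Uc: "U \<in> carrier_mat n n" using U unitary_matD by auto
  define S where "S = U * real_diag_mat n s * cT U"
  have "cT (B * cT U) * (B * cT U) = U * (cT B * B) * cT U"
    using cT_mult[OF Bc cT_carrier[OF Uc]] mult_adjoint_mult_assoc[OF Bc Uc cT_carrier[OF Uc]] by simp
  also have "\<dots> = S * S"
    unfolding S_def orth_colsD(2)[OF B] unitary_conj_mult[OF U real_diag_mat_carrier real_diag_mat_carrier]
    by (simp add: real_diag_mat_mult power2_eq_square)
  finally have "msqrt (cT (B * cT U) * (B * cT U)) = S"
    using msqrt_eqI[OF psd_mat_unitary_conj_real_diag_mat[OF U orth_colsD(3)[OF B]]] unfolding S_def by simp
  hence "nuclear_norm (B * cT U) = Re (mtrace S)" unfolding nuclear_norm_def by simp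
  also have "mtrace S = mtrace (real_diag_mat n s)" unfolding S_def by (rule mtrace_unitary_conj[OF U]) simp
  finally show ?thesis by (simp add: mtrace_def)
qed

lemma vnorm_mult_orth_cols_le:
  assumes B: "orth_cols m n B s" and U: "unitary_mat n U" and v: "v \<in> carrier_vec n"
    and nv: "vnorm v = 1" and M: "\<And>i. i < n \<Longrightarrow> s i \<le> M"
  shows "vnorm ((B * cT U) *\<^sub>v v) \<le> M"
proof -
  have Uc: "U \<in> carrier_mat n n" using U unitary_matD by auto
  have n: "0 < n" using v nv unfolding vnorm_def by (cases n) auto
  have M0: "0 \<le> M" using orth_colsD(3)[OF B n] M[OF n] by linarith
  define w where "w = cT U *\<^sub>v v"
  have w: "w \<in> carrier_vec n" unfolding w_def using mult_mat_vec_carrier[OF cT_carrier[OF Uc] v] .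
  have "(B * cT U) *\<^sub>v v = B *\<^sub>v w"
    unfolding w_def using assoc_mult_mat_vec[OF orth_colsD(1)[OF B] cT_carrier[OF Uc] v] .
  hence "(vnorm ((B * cT U) *\<^sub>v v))\<^sup>2 = (\<Sum>i<n. (s i)\<^sup>2 * (cmod (w $ i))\<^sup>2)"
    using vnorm_sq_mult_orth_cols[OF B w] by simp
  also have "\<dots> \<le> (\<Sum>i<n. M\<^sup>2 * (cmod (w $ i))\<^sup>2)"
    by (intro sum_mono mult_right_mono power_mono) (auto simp: orth_colsD(3)[OF B] M)
  also have "\<dots> = M\<^sup>2 * (vnorm w)\<^sup>2" by (simp add: vnorm_sq[OF w] sum_distrib_left)
  also have "vnorm w = 1" unfolding w_def using vnorm_adjoint_unitary[OF U v] nv by simp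
  finally have "(vnorm ((B * cT U) *\<^sub>v v))\<^sup>2 \<le> M\<^sup>2" by simp
  thus ?thesis using M0 by (rule power2_le_imp_le)
qed

lemma spectral_norm_set_bdd_above: assumes A: "A \<in> carrier_mat m n"
  shows "bdd_above {vnorm (A *\<^sub>v v) | v. v \<in> carrier_vec (dim_col A) \<and> vnorm v = 1}"
proof -
  obtain B s U where B: "orth_cols m n B s" and U: "unitary_mat n U" and AB: "A = B * cT U"
    using orth_cols_factorization[OF A] by blast
  have sle: "s i \<le> (\<Sum>i<n. s i)" if "i < n" for i
    using member_le_sum[of i "{..<n}" s] orth_colsD(3)[OF B] that by auto
  have "vnorm (A *\<^sub>v v) \<le> (\<Sum>i<n. s i)" if "v \<in> carrier_vec n" "vnorm v = 1" for v
    unfolding AB by (rule vnorm_mult_orth_cols_le[OF B U that sle])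
  thus ?thesis using A by (auto simp: bdd_above_def)
qed

lemma vnorm_le_spectral_norm:
  assumes A: "A \<in> carrier_mat m n" and v: "v \<in> carrier_vec n" and nv: "vnorm v = 1"
  shows "vnorm (A *\<^sub>v v) \<le> spectral_norm A"
  unfolding spectral_norm_def by (rule cSup_upper) (use spectral_norm_set_bdd_above[OF A] A v nv in auto)

lemma spectral_norm_le:
  assumes A: "A \<in> carrier_mat m n" and n: "0 < n"
    and K: "\<And>v. v \<in> carrier_vec n \<Longrightarrow> vnorm v = 1 \<Longrightarrow> vnorm (A *\<^sub>v v) \<le> K"
  shows "spectral_norm A \<le> K"
  unfolding spectral_norm_def
proof (rule cSup_least)
  show "{vnorm (A *\<^sub>v v) | v. v \<in> carrier_vec (dim_col A) \<and> vnorm v = 1} \<noteq> {}"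
    using A vnorm_unit_vec[OF n] unit_vec_carrier by blast
qed (use K A in auto)

lemma spectral_norm_orth_cols: assumes B: "orth_cols m n B s" and U: "unitary_mat n U" and n: "0 < n"
  shows "spectral_norm (B * cT U) = Max (s ` {..<n})"
proof -
  have Bc: "B \<in> carrier_mat m n" using orth_colsD(1)[OF B] .
  have Uc: "U \<in> carrier_mat n n" using U unitary_matD by auto
  have Ac: "B * cT U \<in> carrier_mat m n" using Bc Uc by simp
  define M where "M = Max (s ` {..<n})"
  have M: "\<And>i. i < n \<Longrightarrow> s i \<le> M" unfolding M_def by simp
  have "M \<in> s ` {..<n}" unfolding M_def by (rule Max_in) (use n in auto)
  then obtain j where j: "j < n" "s j = M" by auto
  have "(B * cT U) *\<^sub>v col U j = B *\<^sub>v unit_vec n j"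
    using assoc_mult_mat_vec[OF Bc cT_carrier[OF Uc] unitary_mat_col(2)[OF U j(1)]] unitary_mat_col(1)[OF U j(1)]
    by simp
  also have "B *\<^sub>v unit_vec n j = col B j"
    using Bc j by (intro eq_vecI) (auto simp: scalar_prod_def unit_vec_def atLeast0LessThan
        if_distrib[of "\<lambda>x. _ * x"] cong: if_cong)
  finally have "vnorm ((B * cT U) *\<^sub>v col U j) = M" using vnorm_col_orth_cols[OF B j(1)] j by simp
  hence "M \<le> spectral_norm (B * cT U)"
    using vnorm_le_spectral_norm[OF Ac unitary_mat_col(2)[OF U j(1)] vnorm_unitary_col[OF U j(1)]] by simp
  moreover have "spectral_norm (B * cT U) \<le> M"
    by (rule spectral_norm_le[OF Ac n]) (rule vnorm_mult_orth_cols_le[OF B U _ _ M])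
  ultimately show ?thesis unfolding M_def by simp
qed


lemma innerV_le_nuclear_spectral: assumes A: "A \<in> carrier_mat m n" and Z: "Z \<in> carrier_mat m n"
  shows "innerV A Z \<le> nuclear_norm A * spectral_norm Z"
proof -
  obtain B s U where B: "orth_cols m n B s" and U: "unitary_mat n U" and AB: "A = B * cT U"
    using orth_cols_factorization[OF A] by blast
  have Bc: "B \<in> carrier_mat m n" using orth_colsD(1)[OF B] .
  have Uc: "U \<in> carrier_mat n n" using U unitary_matD by auto
  define Y where "Y = Z * U"
  have Yc: "Y \<in> carrier_mat m n" unfolding Y_def using Z Uc by simp
  have "A * cT Z = B * cT Y"
    unfolding AB Y_def cT_mult[OF Z Uc] using assoc_mult_mat[OF Bc cT_carrier[OF Uc] cT_carrier[OF Z]] by simp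
  hence "innerV A Z = Re (\<Sum>i<m. \<Sum>l<n. B $$ (i,l) * cnj (Y $$ (i,l)))"
    unfolding innerV_def mtrace_def using Bc Yc by (simp add: scalar_prod_def atLeast0LessThan)
  also have "(\<Sum>i<m. \<Sum>l<n. B $$ (i,l) * cnj (Y $$ (i,l))) = (\<Sum>l<n. cinner m (col B l) (col Y l))"
    unfolding cinner_def using Bc Yc by (subst sum.swap) (intro sum.cong, auto)
  also have "Re \<dots> = (\<Sum>l<n. Re (cinner m (col B l) (col Y l)))" by (simp add: Re_sum)
  also have "\<dots> \<le> (\<Sum>l<n. s l * spectral_norm Z)"
  proof (rule sum_mono)
    fix l assume "l \<in> {..<n}"
    hence l: "l < n" by simp
    have cB: "col B l \<in> carrier_vec m" and cY: "col Y l \<in> carrier_vec m"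
      using Bc Yc l by (auto simp: carrier_vecI)
    have "Re (cinner m (col B l) (col Y l)) \<le> s l * vnorm (Z *\<^sub>v col U l)"
      using cinner_cauchy_schwarz[OF cB cY] vnorm_col_orth_cols[OF B l] col_mult2[OF Z Uc l]
      unfolding Y_def by simp
    also have "\<dots> \<le> s l * spectral_norm Z"
      using vnorm_le_spectral_norm[OF Z unitary_mat_col(2)[OF U l] vnorm_unitary_col[OF U l]]
        orth_colsD(3)[OF B l] by (rule mult_left_mono)
    finally show "Re (cinner m (col B l) (col Y l)) \<le> s l * spectral_norm Z" .
  qed
  also have "\<dots> = nuclear_norm A * spectral_norm Z"
    unfolding AB nuclear_norm_orth_cols[OF B U] by (simp add: sum_distrib_right)
  finally show ?thesis .
qed

lemma innerV_commute: "A \<in> carrier_mat m n \<Longrightarrow> B \<in> carrier_mat m n \<Longrightarrow> innerV A B = innerV B A"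
  by (simp add: innerV_eq_sum[of _ m n] mult.commute)

lemma innerV_add_left: "A \<in> carrier_mat m n \<Longrightarrow> B \<in> carrier_mat m n \<Longrightarrow> C \<in> carrier_mat m n \<Longrightarrow>
    innerV (A + B) C = innerV A C + innerV B C"
  by (simp add: innerV_eq_sum[of _ m n] sum.distrib algebra_simps)

lemma innerV_add_right: "A \<in> carrier_mat m n \<Longrightarrow> B \<in> carrier_mat m n \<Longrightarrow> C \<in> carrier_mat m n \<Longrightarrow>
    innerV C (A + B) = innerV C A + innerV C B"
  by (simp add: innerV_eq_sum[of _ m n] sum.distrib algebra_simps)

lemma innerV_diff_right: "A \<in> carrier_mat m n \<Longrightarrow> B \<in> carrier_mat m n \<Longrightarrow> C \<in> carrier_mat m n \<Longrightarrow>
    innerV C (A - B) = innerV C A - innerV C B"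
  using minus_carrier_mat[of B m n A] by (simp add: innerV_eq_sum[of _ m n] sum_subtractf algebra_simps)

lemma innerV_self: "A \<in> carrier_mat m n \<Longrightarrow> innerV A A = (\<Sum>i<m. \<Sum>j<n. (cmod (A $$ (i,j)))\<^sup>2)"
  unfolding innerV_eq_sum[of A m n A]
  by (intro sum.cong refl) (simp only: mult_cnj_eq_cmod_sq Re_complex_of_real of_real_power[symmetric])

lemma innerV_self_nonneg: "A \<in> carrier_mat m n \<Longrightarrow> innerV A A \<ge> 0"
  by (simp add: innerV_self sum_nonneg)

lemma innerV_self_eq_0: assumes A: "A \<in> carrier_mat m n" and z: "innerV A A = 0" shows "A = 0\<^sub>m m n"
proof (rule eq_matI)
  fix i j assume "i < dim_row (0\<^sub>m m n :: complex mat)" "j < dim_col (0\<^sub>m m n :: complex mat)"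
  hence i: "i < m" and j: "j < n" by auto
  have "\<forall>i\<in>{..<m}. (\<Sum>j<n. (cmod (A $$ (i,j)))\<^sup>2) = 0"
    using z innerV_self[OF A] by (subst sum_nonneg_eq_0_iff[symmetric]) (auto intro: sum_nonneg)
  hence "\<forall>j\<in>{..<n}. (cmod (A $$ (i,j)))\<^sup>2 = 0" using i by (subst sum_nonneg_eq_0_iff[symmetric]) auto
  thus "A $$ (i,j) = 0\<^sub>m m n $$ (i,j)" using i j by auto
qed (use A in auto)

lemma innerV_mult_adjoint_unitary:
  assumes P: "P \<in> carrier_mat m n" and Q: "Q \<in> carrier_mat m n" and U: "unitary_mat n U"
  shows "innerV (P * cT U) (Q * cT U) = Re (mtrace (cT Q * P))"
proof -
  have Uc: "U \<in> carrier_mat n n" using U unitary_matD by auto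
  have "P * cT U * cT (Q * cT U) = P * (cT U * U) * cT Q"
    using cT_mult[OF Q cT_carrier[OF Uc]] mult_adjoint_mult_assoc[OF Uc P cT_carrier[OF Q]] by simp
  also have "\<dots> = P * cT Q" using unitary_matD(2)[OF U] P by simp
  finally show ?thesis unfolding innerV_def using mtrace_mult_comm[OF P cT_carrier[OF Q]] by simp
qed


text \<open>For B U^* with singular values s, this is the matrix with the same singular vectors and
  singular values g; it is meant for g vanishing wherever s does.\<close>

definition sv_rescale :: "nat \<Rightarrow> complex mat \<Rightarrow> complex mat \<Rightarrow> (nat \<Rightarrow> real) \<Rightarrow> (nat \<Rightarrow> real) \<Rightarrow> complex mat" where
  "sv_rescale n B U s g = B * real_diag_mat n (\<lambda>i. if s i = 0 then 0 else g i / s i) * cT U"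

lemma sv_rescale_carrier: "B \<in> carrier_mat m n \<Longrightarrow> U \<in> carrier_mat n n \<Longrightarrow> sv_rescale n B U s g \<in> carrier_mat m n"
  unfolding sv_rescale_def by (metis mult_carrier_mat real_diag_mat_carrier cT_carrier)

lemma orth_cols_cong: assumes B: "orth_cols m n B s" and st: "\<And>i. i < n \<Longrightarrow> s i = t i"
  shows "orth_cols m n B t"
proof -
  have "real_diag_mat n (\<lambda>i. (s i)\<^sup>2) = real_diag_mat n (\<lambda>i. (t i)\<^sup>2)" by (intro eq_matI) (auto simp: st)
  thus ?thesis using B st unfolding orth_cols_def by auto
qed

lemma orth_cols_sv_rescale:
  assumes B: "orth_cols m n B s" and g: "\<And>i. i < n \<Longrightarrow> 0 \<le> g i" and g0: "\<And>i. i < n \<Longrightarrow> s i = 0 \<Longrightarrow> g i = 0"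
  shows "orth_cols m n (B * real_diag_mat n (\<lambda>i. if s i = 0 then 0 else g i / s i)) g"
proof (rule orth_cols_cong)
  show "orth_cols m n (B * real_diag_mat n (\<lambda>i. if s i = 0 then 0 else g i / s i))
      (\<lambda>i. (if s i = 0 then 0 else g i / s i) * s i)"
    using orth_colsD(3)[OF B] g by (intro orth_cols_mult_real_diag_mat[OF B]) auto
qed (use g0 in auto)

lemma nuclear_norm_sv_rescale:
  assumes B: "orth_cols m n B s" and U: "unitary_mat n U"
    and g: "\<And>i. i < n \<Longrightarrow> 0 \<le> g i" and g0: "\<And>i. i < n \<Longrightarrow> s i = 0 \<Longrightarrow> g i = 0"
  shows "nuclear_norm (sv_rescale n B U s g) = (\<Sum>i<n. g i)"
  unfolding sv_rescale_def using nuclear_norm_orth_cols[OF orth_cols_sv_rescale[OF B g g0] U] .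

lemma spectral_norm_sv_rescale:
  assumes B: "orth_cols m n B s" and U: "unitary_mat n U" and n: "0 < n"
    and g: "\<And>i. i < n \<Longrightarrow> 0 \<le> g i" and g0: "\<And>i. i < n \<Longrightarrow> s i = 0 \<Longrightarrow> g i = 0"
  shows "spectral_norm (sv_rescale n B U s g) = Max (g ` {..<n})"
  unfolding sv_rescale_def using spectral_norm_orth_cols[OF orth_cols_sv_rescale[OF B g g0] U n] .

lemma innerV_sv_rescale:
  assumes B: "orth_cols m n B s" and U: "unitary_mat n U"
    and g0: "\<And>i. i < n \<Longrightarrow> s i = 0 \<Longrightarrow> g i = 0"
  shows "innerV (sv_rescale n B U s g) (sv_rescale n B U s h) = (\<Sum>i<n. g i * h i)"
proof -
  have Bc: "B \<in> carrier_mat m n" using orth_colsD(1)[OF B] .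
  define g' h' where "g' = (\<lambda>i. if s i = 0 then 0 else g i / s i)" and "h' = (\<lambda>i. if s i = 0 then 0 else h i / s i)"
  have "cT (B * real_diag_mat n h') * (B * real_diag_mat n g') = real_diag_mat n h' * (cT B * B) * real_diag_mat n g'"
    unfolding cT_mult[OF Bc real_diag_mat_carrier] cT_real_diag_mat
    using mult_adjoint_mult_assoc[OF Bc real_diag_mat_carrier real_diag_mat_carrier] .
  also have "\<dots> = real_diag_mat n (\<lambda>i. h' i * (s i)\<^sup>2 * g' i)"
    unfolding orth_colsD(2)[OF B] real_diag_mat_mult ..
  finally have "innerV (sv_rescale n B U s g) (sv_rescale n B U s h) = (\<Sum>i<n. h' i * (s i)\<^sup>2 * g' i)"
    unfolding sv_rescale_def g'_def[symmetric] h'_def[symmetric]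
    using innerV_mult_adjoint_unitary[OF _ _ U, of "B * real_diag_mat n g'" m "B * real_diag_mat n h'"] Bc
    by (simp add: mtrace_def)
  also have "\<dots> = (\<Sum>i<n. g i * h i)"
    unfolding g'_def h'_def using g0 by (intro sum.cong) (auto simp: power2_eq_square)
  finally show ?thesis .
qed

lemma sv_rescale_add: assumes B: "B \<in> carrier_mat m n" and U: "U \<in> carrier_mat n n"
  shows "sv_rescale n B U s g + sv_rescale n B U s h = sv_rescale n B U s (\<lambda>i. g i + h i)"
proof -
  have "real_diag_mat n (\<lambda>i. if s i = 0 then 0 else g i / s i) + real_diag_mat n (\<lambda>i. if s i = 0 then 0 else h i / s i)
      = real_diag_mat n (\<lambda>i. if s i = 0 then 0 else (g i + h i) / s i)"
    by (rule eq_matI) (auto simp: add_divide_distrib)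
  moreover have "B * F * cT U + B * G * cT U = B * (F + G) * cT U"
    if "F \<in> carrier_mat n n" "G \<in> carrier_mat n n" for F G
    using add_mult_distrib_mat[OF mult_carrier_mat[OF B that(1)] mult_carrier_mat[OF B that(2)] cT_carrier[OF U]]
      mult_add_distrib_mat[OF B that] by simp
  ultimately show ?thesis unfolding sv_rescale_def by simp
qed

lemma sv_rescale_self: assumes B: "orth_cols m n B s" and U: "U \<in> carrier_mat n n"
  shows "sv_rescale n B U s s = B * cT U"
proof -
  have Bc: "B \<in> carrier_mat m n" using orth_colsD(1)[OF B] .
  have "B * real_diag_mat n (\<lambda>i. if s i = 0 then 0 else s i / s i) = B"
    unfolding mult_real_diag_mat[OF Bc] using orth_cols_col_zero[OF B] Bc by (intro eq_matI) auto
  thus ?thesis unfolding sv_rescale_def by simp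
qed

lemma nuclear_norm_nonneg: assumes A: "A \<in> carrier_mat m n" shows "0 \<le> nuclear_norm A"
proof -
  obtain B s U where B: "orth_cols m n B s" and U: "unitary_mat n U" and AB: "A = B * cT U"
    using orth_cols_factorization[OF A] by blast
  show ?thesis unfolding AB nuclear_norm_orth_cols[OF B U] using orth_colsD(3)[OF B] by (intro sum_nonneg) auto
qed

lemma nuclear_norm_eq_0: assumes A: "A \<in> carrier_mat m n" and z: "nuclear_norm A = 0"
  shows "A = 0\<^sub>m m n"
proof -
  obtain B s U where B: "orth_cols m n B s" and U: "unitary_mat n U" and AB: "A = B * cT U"
    using orth_cols_factorization[OF A] by blast
  have Bc: "B \<in> carrier_mat m n" using orth_colsD(1)[OF B] .
  have "(\<Sum>i<n. s i) = 0" using z unfolding AB nuclear_norm_orth_cols[OF B U] .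
  hence "\<forall>i\<in>{..<n}. s i = 0" using orth_colsD(3)[OF B] by (subst sum_nonneg_eq_0_iff[symmetric]) auto
  hence "real_diag_mat n (\<lambda>i. if s i = 0 then 0 else s i / s i) = 0\<^sub>m n n" by (intro eq_matI) auto
  hence "sv_rescale n B U s s = 0\<^sub>m m n"
    unfolding sv_rescale_def using Bc unitary_matD(1)[OF U] by simp
  thus ?thesis unfolding AB sv_rescale_self[OF B unitary_matD(1)[OF U]] .
qed

lemma nuclear_norm_zero_mat: "nuclear_norm (0\<^sub>m m n) = 0"
proof -
  have "orth_cols m n (0\<^sub>m m n) (\<lambda>_. 0)" unfolding orth_cols_def by (auto simp: mat_eq_iff)
  moreover have "unitary_mat n (1\<^sub>m n)" unfolding unitary_mat_def by simp
  ultimately show ?thesis using nuclear_norm_orth_cols[of m n "0\<^sub>m m n" "\<lambda>_. 0" "1\<^sub>m n"] by simp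
qed


section \<open>Tightness of the nuclear and spectral norms\<close>

definition sv_excess :: "nat \<Rightarrow> (nat \<Rightarrow> real) \<Rightarrow> real \<Rightarrow> real" where
  "sv_excess n s t = (\<Sum>i<n. max (s i - t) 0)"

lemma sv_excess_attains: assumes s: "\<And>i. i < n \<Longrightarrow> 0 \<le> s i" and x: "0 \<le> x" "x \<le> sv_excess n s 0"
  shows "\<exists>t\<ge>0. sv_excess n s t = x"
proof -
  define T where "T = (\<Sum>i<n. s i)"
  have "s i \<le> T" if "i < n" for i unfolding T_def using member_le_sum[of i "{..<n}" s] s that by auto
  hence "sv_excess n s T = 0" unfolding sv_excess_def by (intro sum.neutral) auto
  moreover have T0: "0 \<le> T" unfolding T_def using s by (intro sum_nonneg) auto
  moreover have "continuous_on {0..T} (sv_excess n s)" unfolding sv_excess_def by (intro continuous_intros)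
  ultimately obtain t where "0 \<le> t" "t \<le> T" "sv_excess n s t = x"
    using IVT2'[of "sv_excess n s" T x 0] x by fastforce
  thus ?thesis by blast
qed

lemma norm2V_nonneg: "A \<in> carrier_mat m n \<Longrightarrow> 0 \<le> norm2V A"
  unfolding norm2V_def using innerV_self_nonneg by simp

lemma norm2V_zero_mat: "norm2V (0\<^sub>m m n) = 0"
  unfolding norm2V_def using innerV_self[of "0\<^sub>m m n" m n] by simp

lemma weighted_bound_imp_pareto:
  fixes k x y x0 y0 :: real
  assumes k: "0 < k" and bound: "x0 + y0 * k \<le> x + k * y"
  shows "x0 < x \<or> y0 < y \<or> (x, y) = (x0, y0)"
proof (rule ccontr)
  assume neg: "\<not> ?thesis"
  hence "x \<le> x0" and "k * y \<le> k * y0" using k by (auto simp: mult_left_mono)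
  moreover have "y0 * k = k * y0" by (rule mult.commute)
  ultimately have "x = x0" and "k * y = k * y0" using bound by linarith+
  thus False using neg k by simp
qed

lemma pq_decompD:
  assumes "pq_decomp P Q m n c a b"
  shows "a \<in> carrier_mat m n" "b \<in> carrier_mat m n" "c = a + b"
  using assms unfolding pq_decomp_def by auto

lemma pq_decomp_norm2V_le:
  assumes X2: "pq_decomp X norm2V m n c a b" and c: "c \<in> carrier_mat m n"
  shows "X a \<le> X c"
proof -
  have "c = c + 0\<^sub>m m n" using c by simp
  hence "X c > X a \<or> norm2V (0\<^sub>m m n) > norm2V b \<or> (X c, norm2V (0\<^sub>m m n)) = (X a, norm2V b)"
    using X2 c unfolding pq_decomp_def by (meson zero_carrier_mat)
  moreover have "0 \<le> norm2V b" using X2 norm2V_nonneg unfolding pq_decomp_def by blast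
  ultimately show ?thesis unfolding norm2V_zero_mat by auto
qed

lemma add_mat_eq_shift:
  fixes a b a' b' :: "'a :: ab_group_add mat"
  assumes "a \<in> carrier_mat m n" "b \<in> carrier_mat m n" "a' \<in> carrier_mat m n" "b' \<in> carrier_mat m n"
    and eq: "a + b = a' + b'"
  shows "b = b' + (a' - a)"
proof (rule eq_matI)
  fix i j assume "i < dim_row (b' + (a' - a))" "j < dim_col (b' + (a' - a))"
  hence i: "i < m" and j: "j < n" using assms by auto
  have "(a + b) $$ (i,j) = (a' + b') $$ (i,j)" using eq by simp
  hence "a $$ (i,j) + b $$ (i,j) = a' $$ (i,j) + b' $$ (i,j)" using assms(1-4) i j by simp
  thus "b $$ (i,j) = (b' + (a' - a)) $$ (i,j)" using assms(1-4) i j by (simp add: algebra_simps)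
qed (use assms in auto)

text \<open>Duality gives <b',a> \<le> |a|_* |b'|_sigma = <b',a'>, so with d = a' - a we get
  |b|^2 = |b' + d|^2 \<ge> |b'|^2 + |d|^2, and minimality of |b| forces d = 0.\<close>

lemma X2_decomp_eq_aligned:
  assumes X2: "pq_decomp nuclear_norm norm2V m n c a b"
    and a': "a' \<in> carrier_mat m n" and b': "b' \<in> carrier_mat m n" and c: "c = a' + b'"
    and same: "nuclear_norm a' = nuclear_norm a"
    and aligned: "innerV b' a' = nuclear_norm a' * spectral_norm b'"
  shows "a = a' \<and> b = b'"
proof -
  have ac: "a \<in> carrier_mat m n" and bc: "b \<in> carrier_mat m n" and cab: "c = a + b"
    using X2 unfolding pq_decomp_def by auto
  define d where "d = a' - a"
  have dc: "d \<in> carrier_mat m n" unfolding d_def using minus_carrier_mat[OF ac] .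
  have bd: "b = b' + d" unfolding d_def using add_mat_eq_shift[OF ac bc a' b'] cab c by simp
  have "innerV b' a \<le> innerV b' a'"
    using innerV_le_nuclear_spectral[OF ac b'] innerV_commute[OF b' ac] same aligned by simp
  hence "0 \<le> innerV b' d" unfolding d_def innerV_diff_right[OF a' ac b'] by simp
  moreover have "innerV b b = innerV b' b' + 2 * innerV b' d + innerV d d"
    unfolding bd using b' dc
    by (simp add: innerV_add_left[of _ m n] innerV_add_right[of _ m n] innerV_commute[of d m n b'])
  moreover have "nuclear_norm a' > nuclear_norm a \<or> norm2V b' > norm2V b \<or>
      (nuclear_norm a', norm2V b') = (nuclear_norm a, norm2V b)"
    using X2 a' b' c unfolding pq_decomp_def by blast
  hence "norm2V b \<le> norm2V b'" using same by auto
  hence "innerV b b \<le> innerV b' b'"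
    unfolding norm2V_def using innerV_self_nonneg[OF bc] innerV_self_nonneg[OF b'] by simp
  ultimately have "innerV d d = 0" using innerV_self_nonneg[OF dc] by simp
  hence "d = 0\<^sub>m m n" using innerV_self_eq_0[OF dc] by simp
  hence "b = b'" using bd b' by simp
  moreover have "a = a'"
  proof -
    have "b + a = b' + a'" using cab c comm_add_mat[OF ac bc] comm_add_mat[OF a' b'] by simp
    hence "a = a' + (b' - b)" using add_mat_eq_shift[OF bc ac b' a'] by simp
    also have "b' - b = 0\<^sub>m m n" using \<open>b = b'\<close> b' by (auto simp: mat_eq_iff)
    finally show ?thesis using a' by simp
  qed
  ultimately show ?thesis by simp
qed


locale orth_cols_factored =
  fixes m n :: nat and B U :: "complex mat" and s :: "nat \<Rightarrow> real"
  assumes orth: "orth_cols m n B s" and unitary: "unitary_mat n U"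
begin

lemma B_carrier: "B \<in> carrier_mat m n" and U_carrier: "U \<in> carrier_mat n n"
  and s_nonneg: "i < n \<Longrightarrow> 0 \<le> s i"
  using orth_colsD[OF orth] unitary_matD(1)[OF unitary] by auto

definition excess_part :: "real \<Rightarrow> complex mat" where
  "excess_part t = sv_rescale n B U s (\<lambda>i. max (s i - t) 0)"

definition capped_part :: "real \<Rightarrow> complex mat" where
  "capped_part t = sv_rescale n B U s (\<lambda>i. min (s i) t)"

lemma excess_part_carrier: "excess_part t \<in> carrier_mat m n"
  and capped_part_carrier: "capped_part t \<in> carrier_mat m n"
  unfolding excess_part_def capped_part_def using sv_rescale_carrier[OF B_carrier U_carrier] by auto

lemma excess_plus_capped: "excess_part t + capped_part t = B * cT U"
proof -
  have "(\<lambda>i. max (s i - t) 0 + min (s i) t) = s" by (rule ext) linarith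
  thus ?thesis unfolding excess_part_def capped_part_def sv_rescale_add[OF B_carrier U_carrier]
    using sv_rescale_self[OF orth U_carrier] by simp
qed

lemma nuclear_norm_excess_part: "0 \<le> t \<Longrightarrow> nuclear_norm (excess_part t) = sv_excess n s t"
  unfolding excess_part_def sv_excess_def by (rule nuclear_norm_sv_rescale[OF orth unitary]) auto

lemma spectral_norm_capped_part: assumes "0 \<le> t" "0 < n"
  shows "spectral_norm (capped_part t) = Max ((\<lambda>i. min (s i) t) ` {..<n})"
  unfolding capped_part_def using assms s_nonneg by (intro spectral_norm_sv_rescale[OF orth unitary]) auto

lemma spectral_norm_capped_part_le: "0 \<le> t \<Longrightarrow> 0 < n \<Longrightarrow> spectral_norm (capped_part t) \<le> t"
  unfolding spectral_norm_capped_part by (subst Max_le_iff) auto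

lemma spectral_norm_capped_part_eq: assumes t: "0 \<le> t" and j: "j < n" "t < s j"
  shows "spectral_norm (capped_part t) = t"
proof -
  have "min (s j) t \<in> (\<lambda>i. min (s i) t) ` {..<n}" using j by blast
  hence "min (s j) t \<le> Max ((\<lambda>i. min (s i) t) ` {..<n})" by (intro Max_ge) auto
  thus ?thesis using spectral_norm_capped_part_le[OF t] spectral_norm_capped_part[OF t] j by simp
qed

lemma innerV_capped_excess: assumes t: "0 \<le> t"
  shows "innerV (capped_part t) (excess_part t) = t * sv_excess n s t"
proof -
  have "innerV (capped_part t) (excess_part t) = (\<Sum>i<n. min (s i) t * max (s i - t) 0)"
    unfolding capped_part_def excess_part_def by (rule innerV_sv_rescale[OF orth unitary]) (use t in auto)
  also have "\<dots> = (\<Sum>i<n. t * max (s i - t) 0)" by (rule sum.cong) (auto simp: max_def min_def)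
  finally show ?thesis unfolding sv_excess_def by (simp add: sum_distrib_left)
qed

lemma capped_excess_aligned: assumes t: "0 \<le> t" and n: "0 < n"
  shows "innerV (capped_part t) (excess_part t) = nuclear_norm (excess_part t) * spectral_norm (capped_part t)"
proof (cases "\<exists>j<n. t < s j")
  case True
  then obtain j where "j < n" "t < s j" by blast
  thus ?thesis using innerV_capped_excess[OF t] nuclear_norm_excess_part[OF t]
      spectral_norm_capped_part_eq[OF t \<open>j < n\<close> \<open>t < s j\<close>] by simp
next
  case False
  hence "sv_excess n s t = 0" unfolding sv_excess_def by (intro sum.neutral) auto
  thus ?thesis using innerV_capped_excess[OF t] nuclear_norm_excess_part[OF t] by simp
qed

lemma factored_carrier: "B * cT U \<in> carrier_mat m n"
  using mult_carrier_mat[OF B_carrier cT_carrier[OF U_carrier]] .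

lemma nuclear_norm_factored: "nuclear_norm (B * cT U) = sv_excess n s 0"
  unfolding nuclear_norm_orth_cols[OF orth unitary] sv_excess_def by (intro sum.cong refl) (simp add: s_nonneg)

lemma X2_decomp_threshold: assumes n: "0 < n" and X2: "pq_decomp nuclear_norm norm2V m n (B * cT U) a b"
  shows "\<exists>t\<ge>0. a = excess_part t \<and> b = capped_part t"
proof -
  have "nuclear_norm a \<le> sv_excess n s 0"
    using pq_decomp_norm2V_le[OF X2 factored_carrier] unfolding nuclear_norm_factored .
  with s_nonneg nuclear_norm_nonneg[OF pq_decompD(1)[OF X2]]
  have "\<exists>t\<ge>0. sv_excess n s t = nuclear_norm a" by (rule sv_excess_attains)
  then obtain t where t: "0 \<le> t" and same: "sv_excess n s t = nuclear_norm a" by blast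
  have "a = excess_part t \<and> b = capped_part t"
  proof (rule X2_decomp_eq_aligned[OF X2 excess_part_carrier capped_part_carrier excess_plus_capped[symmetric]])
    show "nuclear_norm (excess_part t) = nuclear_norm a" using nuclear_norm_excess_part[OF t] same by simp
  qed (rule capped_excess_aligned[OF t n])
  thus ?thesis using t by blast
qed

text \<open>The dual certificate: the partial isometry onto the singular directions above the threshold.\<close>

definition above_part :: "real \<Rightarrow> complex mat" where
  "above_part t = sv_rescale n B U s (\<lambda>i. of_bool (t < s i))"

lemma above_part_carrier: "above_part t \<in> carrier_mat m n"
  unfolding above_part_def using sv_rescale_carrier[OF B_carrier U_carrier] .

lemma nuclear_norm_above_part: "0 \<le> t \<Longrightarrow> nuclear_norm (above_part t) = (\<Sum>i<n. of_bool (t < s i))"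
  unfolding above_part_def by (rule nuclear_norm_sv_rescale[OF orth unitary]) auto

lemma nuclear_norm_above_part_pos: assumes "0 \<le> t" "j < n" "t < s j"
  shows "0 < nuclear_norm (above_part t)"
proof -
  have "(of_bool (t < s j)) \<le> (\<Sum>i<n. of_bool (t < s i) :: real)"
    by (rule member_le_sum) (use assms in auto)
  thus ?thesis unfolding nuclear_norm_above_part[OF assms(1)] using assms by simp
qed

lemma spectral_norm_above_part_le: assumes t: "0 \<le> t" and n: "0 < n"
  shows "spectral_norm (above_part t) \<le> 1"
proof -
  have "spectral_norm (above_part t) = Max ((\<lambda>i. of_bool (t < s i)) ` {..<n})"
    unfolding above_part_def by (rule spectral_norm_sv_rescale[OF orth unitary n]) (use t in auto)
  also have "\<dots> \<le> 1" using n by (subst Max_le_iff) auto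
  finally show ?thesis .
qed

lemma innerV_above_part: assumes t: "0 \<le> t"
  shows "innerV (B * cT U) (above_part t) = sv_excess n s t + t * nuclear_norm (above_part t)"
proof -
  have "innerV (B * cT U) (above_part t) = (\<Sum>i<n. s i * (of_bool (t < s i)))"
    unfolding above_part_def sv_rescale_self[OF orth U_carrier, symmetric]
    by (rule innerV_sv_rescale[OF orth unitary]) (use t in auto)
  also have "\<dots> = (\<Sum>i<n. max (s i - t) 0 + t * (of_bool (t < s i)))" by (rule sum.cong) auto
  finally show ?thesis unfolding nuclear_norm_above_part[OF t] sv_excess_def
    by (simp add: sum.distrib sum_distrib_left)
qed

lemma certificate_bound:
  assumes t: "0 \<le> t" and n: "0 < n" and a': "a' \<in> carrier_mat m n" and b': "b' \<in> carrier_mat m n"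
    and c: "B * cT U = a' + b'"
  shows "sv_excess n s t + t * nuclear_norm (above_part t)
    \<le> nuclear_norm a' + nuclear_norm (above_part t) * spectral_norm b'"
proof -
  let ?G = "above_part t"
  have "sv_excess n s t + t * nuclear_norm ?G = innerV a' ?G + innerV b' ?G"
    unfolding innerV_above_part[OF t, symmetric] c using innerV_add_left[OF a' b' above_part_carrier] .
  also have "innerV a' ?G \<le> nuclear_norm a'"
    using innerV_le_nuclear_spectral[OF a' above_part_carrier] spectral_norm_above_part_le[OF t n]
      nuclear_norm_nonneg[OF a'] by (meson mult_left_le order.trans)
  also have "innerV b' ?G \<le> nuclear_norm ?G * spectral_norm b'"
    using innerV_le_nuclear_spectral[OF above_part_carrier b'] innerV_commute[OF b' above_part_carrier] by simp
  finally show ?thesis by simp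
qed

lemma threshold_XY_decomp: assumes t: "0 \<le> t" and n: "0 < n"
  shows "pq_decomp nuclear_norm spectral_norm m n (B * cT U) (excess_part t) (capped_part t)"
  unfolding pq_decomp_def
proof (intro conjI allI impI)
  show "excess_part t \<in> carrier_mat m n" "capped_part t \<in> carrier_mat m n"
    "B * cT U = excess_part t + capped_part t"
    using excess_part_carrier capped_part_carrier excess_plus_capped by auto
  fix a' b' assume "a' \<in> carrier_mat m n \<and> b' \<in> carrier_mat m n \<and> B * cT U = a' + b'"
  hence a': "a' \<in> carrier_mat m n" and b': "b' \<in> carrier_mat m n" and c: "B * cT U = a' + b'" by auto
  have nuc: "nuclear_norm (excess_part t) = sv_excess n s t" using nuclear_norm_excess_part[OF t] .
  show "nuclear_norm (excess_part t) < nuclear_norm a' \<or> spectral_norm (capped_part t) < spectral_norm b' \<or>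
      (nuclear_norm a', spectral_norm b') = (nuclear_norm (excess_part t), spectral_norm (capped_part t))"
  proof (cases "\<exists>j<n. t < s j")
    case False
    hence "sv_excess n s t = 0" unfolding sv_excess_def by (intro sum.neutral) auto
    hence "excess_part t = 0\<^sub>m m n" using nuclear_norm_eq_0[OF excess_part_carrier] nuc by simp
    hence capped: "capped_part t = B * cT U" using excess_plus_capped[of t] capped_part_carrier[of t] by simp
    show ?thesis
    proof (cases "nuclear_norm a' = 0")
      case True
      hence "a' = 0\<^sub>m m n" using nuclear_norm_eq_0[OF a'] by simp
      hence "b' = B * cT U" using c b' by simp
      thus ?thesis using True nuc \<open>sv_excess n s t = 0\<close> capped by simp
    qed (use nuclear_norm_nonneg[OF a'] nuc \<open>sv_excess n s t = 0\<close> in auto)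
  next
    case True
    then obtain j where j: "j < n" "t < s j" by blast
    define G where "G = above_part t"
    have k: "0 < nuclear_norm G" unfolding G_def using nuclear_norm_above_part_pos[OF t j] .
    have bound: "sv_excess n s t + t * nuclear_norm G \<le> nuclear_norm a' + nuclear_norm G * spectral_norm b'"
      unfolding G_def using certificate_bound[OF t n a' b' c] .
    show ?thesis
      using weighted_bound_imp_pareto[OF k bound] nuc spectral_norm_capped_part_eq[OF t j] by simp
  qed
qed

end

lemma carrier_mat_no_cols: "A \<in> carrier_mat m 0 \<Longrightarrow> A = 0\<^sub>m m 0"
  by (rule eq_matI) auto

theorem tight_nuclear_spectral: assumes c: "c \<in> carrier_mat m n"
  shows "tight nuclear_norm spectral_norm m n c"
  unfolding tight_def
proof (intro allI impI)
  fix a b assume X2: "pq_decomp nuclear_norm norm2V m n c a b"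
  show "pq_decomp nuclear_norm spectral_norm m n c a b"
  proof (cases "n = 0")
    case True
    thus ?thesis using pq_decompD[OF X2] carrier_mat_no_cols unfolding pq_decomp_def by metis
  next
    case False
    obtain B s U where B: "orth_cols m n B s" and U: "unitary_mat n U" and cBU: "c = B * cT U"
      using orth_cols_factorization[OF c] by blast
    interpret orth_cols_factored m n B U s using B U by unfold_locales
    obtain t where "0 \<le> t" "a = excess_part t" "b = capped_part t"
      using X2_decomp_threshold[of a b] X2 False cBU by auto
    thus ?thesis using threshold_XY_decomp False cBU by simp
  qed
qed


section \<open>The slope decomposition of a singular value decomposition\<close>

lemma block_id_carrier[simp]: "block_id m n k \<in> carrier_mat m n"
  unfolding block_id_def by auto

lemma block_id_dim[simp]: "dim_row (block_id m n k) = m" "dim_col (block_id m n k) = n"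
  unfolding block_id_def by auto

lemma block_id_index[simp]: "i < m \<Longrightarrow> j < n \<Longrightarrow> block_id m n k $$ (i,j) = (if i = j \<and> i < k then 1 else 0)"
  unfolding block_id_def by auto

definition scaled_frame :: "nat \<Rightarrow> nat \<Rightarrow> complex mat \<Rightarrow> complex mat \<Rightarrow> real \<Rightarrow> nat \<Rightarrow> complex mat" where
  "scaled_frame m n W U x k = complex_of_real x \<cdot>\<^sub>m (W * block_id m n k * cT U)"

lemma adjoint_scaled_block_mult:
  assumes a: "a \<le> m"
  shows "cT (complex_of_real y \<cdot>\<^sub>m block_id m n b) * (complex_of_real x \<cdot>\<^sub>m block_id m n a)
    = real_diag_mat n (\<lambda>i. if i < a \<and> i < b then x * y else 0)"
    (is "cT ?B * ?A = _")
proof (rule eq_matI)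
  fix i j assume "i < dim_row (real_diag_mat n (\<lambda>i. if i < a \<and> i < b then x * y else 0))"
    "j < dim_col (real_diag_mat n (\<lambda>i. if i < a \<and> i < b then x * y else 0))"
  hence i: "i < n" and j: "j < n" by auto
  have "(cT ?B * ?A) $$ (i,j) = (\<Sum>l<m. cT ?B $$ (i,l) * ?A $$ (l,j))"
    by (rule index_mult_mat_lessThan[of _ n m _ n]) (use i j in auto)
  also have "\<dots> = (\<Sum>l<m. if l = i then (if i < a \<and> i = j \<and> i < b then complex_of_real (x * y) else 0) else 0)"
  proof (rule sum.cong[OF refl])
    fix l assume "l \<in> {..<m}"
    hence l: "l < m" by simp
    have e1: "cT ?B $$ (i,l) = cnj (complex_of_real y * (if l = i \<and> l < b then 1 else 0))" using i l by simp
    have e2: "?A $$ (l,j) = complex_of_real x * (if l = j \<and> l < a then 1 else 0)" using j l by simp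
    show "cT ?B $$ (i,l) * ?A $$ (l,j) = (if l = i then (if i < a \<and> i = j \<and> i < b then complex_of_real (x * y) else 0) else 0)"
      unfolding e1 e2 by (cases "l = i"; cases "i = j") auto
  qed
  also have "\<dots> = (if i < a \<and> i = j \<and> i < b then complex_of_real (x * y) else 0)"
    using a by (auto simp: sum.delta)
  finally show "(cT ?B * ?A) $$ (i,j) = real_diag_mat n (\<lambda>i. if i < a \<and> i < b then x * y else 0) $$ (i,j)"
    using i j by auto
qed auto

lemma scaled_frame_eq: assumes "W \<in> carrier_mat m m" "U \<in> carrier_mat n n"
  shows "scaled_frame m n W U x k = W * (complex_of_real x \<cdot>\<^sub>m block_id m n k) * cT U"
proof -
  have "W * (complex_of_real x \<cdot>\<^sub>m block_id m n k) * cT U = (complex_of_real x \<cdot>\<^sub>m (W * block_id m n k)) * cT U"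
    using mult_smult_distrib[OF assms(1) block_id_carrier] by simp
  also have "\<dots> = scaled_frame m n W U x k" unfolding scaled_frame_def
    using mult_smult_assoc_mat[OF mult_carrier_mat[OF assms(1) block_id_carrier] cT_carrier[OF assms(2)]] .
  finally show ?thesis by simp
qed

lemma orth_cols_scaled_block: assumes W: "unitary_mat m W" and k: "k \<le> m" and x: "0 \<le> x"
  shows "orth_cols m n (W * (complex_of_real x \<cdot>\<^sub>m block_id m n k)) (\<lambda>i. if i < k then x else 0)"
proof -
  have Wc: "W \<in> carrier_mat m m" using W unitary_matD by auto
  let ?A = "complex_of_real x \<cdot>\<^sub>m block_id m n k"
  have A: "?A \<in> carrier_mat m n" by simp
  have "cT (W * ?A) * (W * ?A) = cT ?A * (cT W * W) * ?A"
    unfolding cT_mult[OF Wc A] using mult_adjoint_mult_assoc[OF Wc cT_carrier[OF A] A] .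
  also have "\<dots> = cT ?A * ?A" using unitary_matD(2)[OF W] cT_carrier[OF A] by simp
  also have "\<dots> = real_diag_mat n (\<lambda>i. (if i < k then x else 0)\<^sup>2)"
    unfolding adjoint_scaled_block_mult[OF k] by (intro arg_cong[where f="real_diag_mat n"]) (auto simp: power2_eq_square)
  finally show ?thesis unfolding orth_cols_def using Wc x by auto
qed


lemma sum_lessThan_indicator: assumes "k \<le> n" shows "(\<Sum>i<n. if i < k then (g::real) else 0) = real k * g"
proof -
  have "(\<Sum>i<n. if i < k then g else 0) = (\<Sum>i\<in>{i\<in>{..<n}. i < k}. g)"
    using sum.inter_filter[of "{..<n}" "\<lambda>_. g" "\<lambda>i. i < k"] by simp
  also have "{i\<in>{..<n}. i < k} = {..<k}" using assms by auto
  finally show ?thesis by simp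
qed

lemma scaled_frame_norms:
  assumes W: "unitary_mat m W" and U: "unitary_mat n U" and k: "k \<le> min m n" "1 \<le> k" and x: "0 \<le> x"
  shows "nuclear_norm (scaled_frame m n W U x k) = real k * x" "spectral_norm (scaled_frame m n W U x k) = x"
proof -
  have B: "orth_cols m n (W * (complex_of_real x \<cdot>\<^sub>m block_id m n k)) (\<lambda>i. if i < k then x else 0)"
    using orth_cols_scaled_block[OF W _ x] k by simp
  have eq: "scaled_frame m n W U x k = W * (complex_of_real x \<cdot>\<^sub>m block_id m n k) * cT U"
    using scaled_frame_eq unitary_matD(1)[OF W] unitary_matD(1)[OF U] by blast
  show "nuclear_norm (scaled_frame m n W U x k) = real k * x"
    unfolding eq nuclear_norm_orth_cols[OF B U] using sum_lessThan_indicator k by simp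
  have n: "0 < n" using k by simp
  have "spectral_norm (scaled_frame m n W U x k) = Max ((\<lambda>i. if i < k then x else 0) ` {..<n})"
    unfolding eq using spectral_norm_orth_cols[OF B U n] .
  also have "\<dots> = x"
  proof (rule Max_eqI)
    show "x \<in> (\<lambda>i. if i < k then x else 0) ` {..<n}" using n k by (intro image_eqI[of _ _ 0]) auto
  qed (use x in auto)
  finally show "spectral_norm (scaled_frame m n W U x k) = x" .
qed

lemma innerV_scaled_frame:
  assumes W: "unitary_mat m W" and U: "unitary_mat n U" and a: "a \<le> min m n" and b: "b \<le> min m n"
  shows "innerV (scaled_frame m n W U x a) (scaled_frame m n W U y b) = real (min a b) * x * y"
proof -
  have Wc: "W \<in> carrier_mat m m" and Uc: "U \<in> carrier_mat n n" using W U unitary_matD by auto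
  let ?A = "W * (complex_of_real x \<cdot>\<^sub>m block_id m n a)" and ?B = "W * (complex_of_real y \<cdot>\<^sub>m block_id m n b)"
  have A: "?A \<in> carrier_mat m n" and B: "?B \<in> carrier_mat m n" using Wc by auto
  have "cT ?B * ?A = cT (complex_of_real y \<cdot>\<^sub>m block_id m n b) * (cT W * W) * (complex_of_real x \<cdot>\<^sub>m block_id m n a)"
    unfolding cT_mult[OF Wc smult_carrier_mat[OF block_id_carrier]]
    using mult_adjoint_mult_assoc[OF Wc cT_carrier[OF smult_carrier_mat[OF block_id_carrier]]
        smult_carrier_mat[OF block_id_carrier]] by simp
  also have "\<dots> = real_diag_mat n (\<lambda>i. if i < min a b then x * y else 0)"
    using unitary_matD(2)[OF W] adjoint_scaled_block_mult[of a m y n b x] a by simp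
  finally have "innerV (?A * cT U) (?B * cT U) = Re (mtrace (real_diag_mat n (\<lambda>i. if i < min a b then x * y else 0)))"
    unfolding innerV_mult_adjoint_unitary[OF A B U] by simp
  also have "mtrace (real_diag_mat n (\<lambda>i. if i < min a b then x * y else 0))
      = complex_of_real (\<Sum>i<n. if i < min a b then x * y else 0)"
    unfolding mtrace_def of_real_sum by (intro sum.cong) auto
  also have "Re (complex_of_real (\<Sum>i<n. if i < min a b then x * y else 0)) = real (min a b) * x * y"
    using sum_lessThan_indicator[of "min a b" n "x * y"] a b by (simp add: min_le_iff_disj mult.assoc)
  finally show ?thesis using scaled_frame_eq[OF Wc Uc] by simp
qed

lemma ksum_0[simp]: "ksum mu 0 = 0"
  unfolding ksum_def by simp

lemma ksum_Suc: "ksum mu (Suc j) = ksum mu j + mu (Suc j)"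
  unfolding ksum_def by simp

lemma ksum_mono: "j \<le> j' \<Longrightarrow> ksum mu j \<le> ksum mu j'"
  by (induction j' rule: dec_induct) (auto simp: ksum_Suc)


lemma indicator_lt_ksum: "(if i < ksum mu j then 1 else 0 :: real) = (\<Sum>p\<in>{1..j}. if ksum mu (p - 1) \<le> i \<and> i < ksum mu p then 1 else 0)"
proof (induction j)
  case 0 thus ?case by simp
next
  case (Suc j)
  have "(\<Sum>p\<in>{1..Suc j}. if ksum mu (p - 1) \<le> i \<and> i < ksum mu p then 1 else 0 :: real)
      = (\<Sum>p\<in>{1..j}. if ksum mu (p - 1) \<le> i \<and> i < ksum mu p then 1 else 0) + (if ksum mu j \<le> i \<and> i < ksum mu (Suc j) then 1 else 0)"
    by simp
  also have "\<dots> = (if i < ksum mu (Suc j) then 1 else 0)" unfolding Suc.IH[symmetric] by (auto simp: ksum_Suc)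
  finally show ?case by simp
qed

lemma sum_gap: assumes "1 \<le> p" "p \<le> r" shows "(\<Sum>j\<in>{p..r}. gap r lam j) = lam p"
  using assms
proof (induction "r - p" arbitrary: p)
  case 0 thus ?case unfolding gap_def by simp
next
  case (Suc d)
  hence pr: "p < r" by simp
  have "(\<Sum>j\<in>{p..r}. gap r lam j) = gap r lam p + (\<Sum>j\<in>{Suc p..r}. gap r lam j)"
    using pr by (simp add: sum.atLeast_Suc_atMost)
  also have "(\<Sum>j\<in>{Suc p..r}. gap r lam j) = lam (Suc p)" using Suc pr by (intro Suc.hyps) auto
  finally show ?case unfolding gap_def using pr by simp
qed

lemma sum_gap_indicator:
  "(\<Sum>j\<in>{1..r}. gap r lam j * (if i < ksum mu j then 1 else 0))
    = (\<Sum>j\<in>{1..r}. if ksum mu (j - 1) \<le> i \<and> i < ksum mu j then lam j else 0)"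
proof -
  define b where "b = (\<lambda>p. if ksum mu (p - 1) \<le> i \<and> i < ksum mu p then 1 else 0 :: real)"
  have "(\<Sum>j\<in>{1..r}. gap r lam j * (if i < ksum mu j then 1 else 0))
      = (\<Sum>j\<in>{1..r}. \<Sum>p\<in>{1..r}. (if p \<le> j then gap r lam j * b p else 0))"
  proof (rule sum.cong[OF refl])
    fix j assume j: "j \<in> {1..r}"
    have "gap r lam j * (if i < ksum mu j then 1 else 0) = gap r lam j * (\<Sum>p\<in>{1..j}. b p)"
      unfolding b_def indicator_lt_ksum[of i mu j] ..
    also have "\<dots> = (\<Sum>p\<in>{1..j}. gap r lam j * b p)" by (simp add: sum_distrib_left)
    also have "\<dots> = (\<Sum>p\<in>{1..r}. if p \<le> j then gap r lam j * b p else 0)"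
    proof -
      have "{1..j} = {p \<in> {1..r}. p \<le> j}" using j by auto
      hence "(\<Sum>p\<in>{1..j}. gap r lam j * b p) = (\<Sum>p\<in>{p \<in> {1..r}. p \<le> j}. gap r lam j * b p)" by simp
      also have "\<dots> = (\<Sum>p\<in>{1..r}. if p \<le> j then gap r lam j * b p else 0)" by (rule sum.inter_filter) simp
      finally show ?thesis .
    qed
    finally show "gap r lam j * (if i < ksum mu j then 1 else 0) = (\<Sum>p\<in>{1..r}. if p \<le> j then gap r lam j * b p else 0)" .
  qed
  also have "\<dots> = (\<Sum>p\<in>{1..r}. \<Sum>j\<in>{1..r}. (if p \<le> j then gap r lam j * b p else 0))" by (rule sum.swap)
  also have "\<dots> = (\<Sum>p\<in>{1..r}. b p * lam p)"
  proof (rule sum.cong[OF refl])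
    fix p assume p: "p \<in> {1..r}"
    have "(\<Sum>j\<in>{1..r}. (if p \<le> j then gap r lam j * b p else 0)) = (\<Sum>j\<in>{j\<in>{1..r}. p \<le> j}. gap r lam j * b p)"
      by (rule sum.inter_filter[symmetric]) simp
    also have "{j\<in>{1..r}. p \<le> j} = {p..r}" using p by auto
    also have "(\<Sum>j\<in>{p..r}. gap r lam j * b p) = b p * lam p"
      using sum_gap[of p r lam] p by (simp add: sum_distrib_left[symmetric] mult.commute)
    finally show "(\<Sum>j\<in>{1..r}. (if p \<le> j then gap r lam j * b p else 0)) = b p * lam p" .
  qed
  also have "\<dots> = (\<Sum>j\<in>{1..r}. if ksum mu (j - 1) \<le> i \<and> i < ksum mu j then lam j else 0)"
    unfolding b_def by (intro sum.cong) auto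
  finally show ?thesis .
qed

lemma foldr_add_carrier: "(\<forall>j\<in>set xs. G j \<in> carrier_mat m n) \<Longrightarrow> foldr (+) (map G xs) (0\<^sub>m m n) \<in> carrier_mat m n"
  by (induction xs) auto

lemma index_foldr_add: "(\<forall>j\<in>set xs. G j \<in> carrier_mat m n) \<Longrightarrow> i < m \<Longrightarrow> l < n \<Longrightarrow>
  foldr (+) (map G xs) (0\<^sub>m m n) $$ (i,l) = sum_list (map (\<lambda>j. G j $$ (i,l)) xs)"
proof (induction xs)
  case Nil thus ?case by simp
next
  case (Cons x xs)
  have S: "foldr (+) (map G xs) (0\<^sub>m m n) \<in> carrier_mat m n" using foldr_add_carrier[of xs G m n] Cons.prems by auto
  have "foldr (+) (map G (x # xs)) (0\<^sub>m m n) $$ (i,l) = G x $$ (i,l) + foldr (+) (map G xs) (0\<^sub>m m n) $$ (i,l)"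
    using S Cons.prems by simp
  thus ?case using Cons by simp
qed

lemma foldr_add_conj: assumes W: "W \<in> carrier_mat m m" and U: "U \<in> carrier_mat n n"
  shows "(\<forall>j\<in>set xs. G j \<in> carrier_mat m n) \<Longrightarrow>
    foldr (+) (map (\<lambda>j. W * G j * cT U) xs) (0\<^sub>m m n) = W * foldr (+) (map G xs) (0\<^sub>m m n) * cT U"
proof (induction xs)
  case Nil
  show ?case using W U by simp
next
  case (Cons x xs)
  have Gx: "G x \<in> carrier_mat m n" using Cons.prems by simp
  have S: "foldr (+) (map G xs) (0\<^sub>m m n) \<in> carrier_mat m n" using foldr_add_carrier Cons.prems by auto
  have "foldr (+) (map (\<lambda>j. W * G j * cT U) (x # xs)) (0\<^sub>m m n)
      = W * G x * cT U + W * foldr (+) (map G xs) (0\<^sub>m m n) * cT U" using Cons by simp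
  also have "\<dots> = (W * G x + W * foldr (+) (map G xs) (0\<^sub>m m n)) * cT U"
    using add_mult_distrib_mat[OF mult_carrier_mat[OF W Gx] mult_carrier_mat[OF W S] cT_carrier[OF U]] by simp
  also have "W * G x + W * foldr (+) (map G xs) (0\<^sub>m m n) = W * (G x + foldr (+) (map G xs) (0\<^sub>m m n))"
    using mult_add_distrib_mat[OF W Gx S] by simp
  finally show ?case by simp
qed

lemma svd_diag_eq_sum_blocks:
  "svd_diag m n r lam mu
     = foldr (+) (map (\<lambda>j. complex_of_real (gap r lam j) \<cdot>\<^sub>m block_id m n (ksum mu j)) [1..<Suc r]) (0\<^sub>m m n)"
  (is "_ = foldr (+) (map ?G _) _")
proof -
  have Gc: "\<forall>j\<in>set [1..<Suc r]. ?G j \<in> carrier_mat m n" by simp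
  show ?thesis
  proof (rule eq_matI)
    fix i l assume "i < dim_row (foldr (+) (map ?G [1..<Suc r]) (0\<^sub>m m n))"
      "l < dim_col (foldr (+) (map ?G [1..<Suc r]) (0\<^sub>m m n))"
    hence i: "i < m" and l: "l < n" using foldr_add_carrier[OF Gc] by auto
    have "foldr (+) (map ?G [1..<Suc r]) (0\<^sub>m m n) $$ (i,l) = (\<Sum>j\<in>{1..r}. ?G j $$ (i,l))"
      unfolding index_foldr_add[OF Gc i l]
      by (simp only: interv_sum_list_conv_sum_set_nat set_upt atLeastLessThanSuc_atLeastAtMost)
    also have "\<dots> = complex_of_real (\<Sum>j\<in>{1..r}. gap r lam j * (if i < ksum mu j then 1 else 0)) * (if i = l then 1 else 0)"
      unfolding of_real_sum sum_distrib_right using i l by (intro sum.cong) auto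
    also have "\<dots> = svd_diag m n r lam mu $$ (i,l)"
      unfolding sum_gap_indicator svd_diag_def of_real_sum using i l by (auto intro!: sum.cong)
    finally show "svd_diag m n r lam mu $$ (i,l) = foldr (+) (map ?G [1..<Suc r]) (0\<^sub>m m n) $$ (i,l)" by simp
  qed (use foldr_add_carrier[OF Gc] in \<open>auto simp: svd_diag_def\<close>)
qed


locale svd_layout =
  fixes m n r :: nat and lam :: "nat \<Rightarrow> real" and mu :: "nat \<Rightarrow> nat" and W U :: "complex mat"
  assumes mu_pos: "\<forall>j \<in> {1..r}. mu j \<ge> 1"
    and ksum_bound: "ksum mu r \<le> min m n"
    and lam_decr: "\<forall>j \<in> {1..<r}. lam j > lam (Suc j)"
    and lam_pos: "r \<ge> 1 \<longrightarrow> lam r > 0"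
    and W: "unitary_mat m W" and U: "unitary_mat n U"
begin

lemma ksum_le_min: "j \<le> r \<Longrightarrow> ksum mu j \<le> min m n"
  using ksum_mono[of j r mu] ksum_bound by simp

lemma ksum_pos: assumes j: "j \<in> {1..r}" shows "1 \<le> ksum mu j"
proof -
  have "ksum mu 1 \<le> ksum mu j" using j by (intro ksum_mono) auto
  moreover have "1 \<le> mu 1" using mu_pos j by auto
  ultimately show ?thesis by (simp add: ksum_def)
qed

lemma ksum_strict_mono: assumes "j < r" shows "ksum mu j < ksum mu (Suc j)"
proof -
  have "Suc j \<in> {1..r}" using assms by simp
  hence "1 \<le> mu (Suc j)" using mu_pos by blast
  thus ?thesis by (simp add: ksum_Suc)
qed

lemma gap_pos: "j \<in> {1..r} \<Longrightarrow> 0 < gap r lam j"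
  using lam_pos lam_decr unfolding gap_def by auto

lemma Cpart_eq_scaled_frame: "Cpart m n r lam mu W U j = scaled_frame m n W U (gap r lam j) (ksum mu j)"
  unfolding Cpart_def scaled_frame_def ..

lemma Cpart_norms: assumes j: "j \<in> {1..r}"
  shows "nuclear_norm (Cpart m n r lam mu W U j) = real (ksum mu j) * gap r lam j"
    and "spectral_norm (Cpart m n r lam mu W U j) = gap r lam j"
  unfolding Cpart_eq_scaled_frame
  using scaled_frame_norms[OF W U ksum_le_min ksum_pos[OF j] less_imp_le[OF gap_pos[OF j]]] j by auto

lemma Cpart_aligned: assumes "i \<le> j" "j \<in> {1..r}" "i \<in> {1..r}"
  shows "innerV (Cpart m n r lam mu W U i) (Cpart m n r lam mu W U j)
    = nuclear_norm (Cpart m n r lam mu W U i) * spectral_norm (Cpart m n r lam mu W U j)"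
proof -
  have "ksum mu i \<le> ksum mu j" using assms by (intro ksum_mono)
  hence "innerV (Cpart m n r lam mu W U i) (Cpart m n r lam mu W U j) = real (ksum mu i) * gap r lam i * gap r lam j"
    unfolding Cpart_eq_scaled_frame using innerV_scaled_frame[OF W U ksum_le_min ksum_le_min] assms
    by (simp add: min_def)
  thus ?thesis unfolding Cpart_norms[OF assms(2)] Cpart_norms[OF assms(3)] by simp
qed

lemma slope_Cpart: assumes j: "j \<in> {1..r}"
  shows "slope nuclear_norm spectral_norm (Cpart m n r lam mu W U j) = 1 / real (ksum mu j)"
  unfolding slope_def Cpart_norms[OF j] using gap_pos[OF j] by simp

lemma Cpart_carrier: "Cpart m n r lam mu W U j \<in> carrier_mat m n"
  unfolding Cpart_def using W U unitary_matD(1) by (metis cT_carrier mult_carrier_mat smult_carrier_mat block_id_carrier)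

lemma Cpart_nonzero: assumes "j \<in> {1..r}" shows "Cpart m n r lam mu W U j \<noteq> 0\<^sub>m m n"
  using Cpart_norms(1)[OF assms] ksum_pos[OF assms] gap_pos[OF assms] nuclear_norm_zero_mat[of m n] by auto

lemma sum_Cpart: "W * svd_diag m n r lam mu * cT U = foldr (+) (map (Cpart m n r lam mu W U) [1..<Suc r]) (0\<^sub>m m n)"
proof -
  define G where "G = (\<lambda>j. complex_of_real (gap r lam j) \<cdot>\<^sub>m block_id m n (ksum mu j))"
  have Cp: "Cpart m n r lam mu W U = (\<lambda>j. W * G j * cT U)"
    unfolding Cpart_eq_scaled_frame G_def using scaled_frame_eq unitary_matD(1)[OF W] unitary_matD(1)[OF U]
    by blast
  have D: "svd_diag m n r lam mu = foldr (+) (map G [1..<Suc r]) (0\<^sub>m m n)"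
    unfolding G_def by (rule svd_diag_eq_sum_blocks)
  show ?thesis unfolding Cp D
    by (rule foldr_add_conj[OF unitary_matD(1)[OF W] unitary_matD(1)[OF U], symmetric]) (simp add: G_def)
qed

lemma slope_decomp_Cpart:
  "slope_decomp nuclear_norm spectral_norm m n (W * svd_diag m n r lam mu * cT U)
     (map (Cpart m n r lam mu W U) [1..<Suc r])"
proof -
  let ?cs = "map (Cpart m n r lam mu W U) [1..<Suc r]"
  have "\<forall>x \<in> set ?cs. x \<in> carrier_mat m n \<and> x \<noteq> 0\<^sub>m m n" using Cpart_carrier Cpart_nonzero by auto
  moreover have "\<forall>i j. i \<le> j \<and> j < length ?cs \<longrightarrow>
      innerV (?cs ! i) (?cs ! j) = nuclear_norm (?cs ! i) * spectral_norm (?cs ! j)"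
    using Cpart_aligned by (auto simp del: upt_Suc)
  moreover have "slope nuclear_norm spectral_norm (?cs ! i) > slope nuclear_norm spectral_norm (?cs ! Suc i)"
    if i: "Suc i < length ?cs" for i
  proof -
    have i': "Suc i < r" using i by (simp del: upt_Suc)
    have "real (ksum mu (Suc i)) < real (ksum mu (Suc (Suc i)))" using ksum_strict_mono[OF i'] by simp
    thus ?thesis using i slope_Cpart[of "Suc i"] slope_Cpart[of "Suc (Suc i)"] ksum_pos[of "Suc i"]
      by (simp del: upt_Suc add: frac_less2)
  qed
  ultimately show ?thesis unfolding slope_decomp_def using sum_Cpart by blast
qed

end

theorem mainTheorem16:
  fixes m n r :: nat and C W U :: "complex mat" and lam :: "nat \<Rightarrow> real" and mu :: "nat \<Rightarrow> nat"
  assumes "C \<in> carrier_mat m n" and "C \<noteq> 0\<^sub>m m n"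
    and "\<forall>j \<in> {1..r}. mu j \<ge> 1"
    and "ksum mu r \<le> min m n"
    and "\<forall>j \<in> {1..<r}. lam j > lam (Suc j)"
    and "r \<ge> 1 \<longrightarrow> lam r > 0"
    and "unitary_mat m W" and "unitary_mat n U"
    and "C = W * svd_diag m n r lam mu * cT U"
  shows "slope_decomp nuclear_norm spectral_norm m n C (map (Cpart m n r lam mu W U) [1..<Suc r])
       \<and> (\<forall>j \<in> {1..r}. spectral_norm (Cpart m n r lam mu W U j) = gap r lam j
            \<and> nuclear_norm (Cpart m n r lam mu W U j) = real (ksum mu j) * gap r lam j)
       \<and> (\<forall>c \<in> carrier_mat m n. tight nuclear_norm spectral_norm m n c)"
proof -
  interpret svd_layout m n r lam mu W U
    using assms(3-8) by unfold_locales
  show ?thesis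
    using slope_decomp_Cpart Cpart_norms tight_nuclear_spectral assms(9) by simp
qed

end
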